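(* (Upper bound) There is an absolute constant $C$ such that for every $n\geq 1$ and every pair of distinct strings $w,w'\in\{0,1\}^n$, there is a first-order sentence over $\tau_{\mathsf{string}}$ with at most $\log_2(n)+C$ quantifiers that is true in $\mathbf{B}_w$ and false in $\mathbf{B}_{w'}$; moreover this sentence can be taken in prenex form with a quantifier prefix that strictly alternates and ends with $\forall$. (Lower bound) For all sufficiently large $n$, there exist two $n$-bit strings $w,w'$ such that every first-order sentence separating $\{\mathbf{B}_w\}$ from $\{\mathbf{B}_{w'}\}$ has at least $\lfloor \log_2 n\rfloor$ quantifiers.
   Context: Vocabulary $\tau_{\mathsf{string}}=\langle <, S;\ \mathsf{min},\mathsf{max}\rangle$ with $<$ binary, $S$ unary, $\mathsf{min},\mathsf{max}$ constants. A string $w=w_1\cdots w_n\in\{0,1\}^n$ ($n\geq 1$) is encoded by the structure $\mathbf{B}_w$ with universe $\{1,\dots,n\}$, $<$ the usual order, $S=\{i: w_i=1\}$, $\mathsf{min}=1$, $\mathsf{max}=n$. A sentence separates $\mathcal{A}$ from $\mathcal{B}$ if it holds in every structure of $\mathcal{A}$ and fails in every structure of $\mathcal{B}$. The number of quantifiers is the number of quantifier occurrences. *)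

theory Defs
  imports Complex_Main
begin

text \<open>First-order logic over the string vocabulary (<, S; min, max).
Strings w in {0,1}^n are lists of booleans (True = 1), positions 1..n.\<close>

datatype fterm = Var nat | Min | Max

datatype form =
    Less fterm fterm
  | Eq fterm fterm
  | S fterm
  | Neg form
  | Conj form form
  | Disj form form
  | Ex nat form
  | All nat form

fun tvars :: "fterm \<Rightarrow> nat set" where
  "tvars (Var i) = {i}"
| "tvars Min = {}"
| "tvars Max = {}"

fun free_vars :: "form \<Rightarrow> nat set" where
  "free_vars (Less s t) = tvars s \<union> tvars t"
| "free_vars (Eq s t) = tvars s \<union> tvars t"
| "free_vars (S t) = tvars t"
| "free_vars (Neg f) = free_vars f"
| "free_vars (Conj f g) = free_vars f \<union> free_vars g"
| "free_vars (Disj f g) = free_vars f \<union> free_vars g"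
| "free_vars (Ex x f) = free_vars f - {x}"
| "free_vars (All x f) = free_vars f - {x}"

definition sentence :: "form \<Rightarrow> bool" where
  "sentence f \<longleftrightarrow> free_vars f = {}"

fun qcount :: "form \<Rightarrow> nat" where
  "qcount (Less s t) = 0"
| "qcount (Eq s t) = 0"
| "qcount (S t) = 0"
| "qcount (Neg f) = qcount f"
| "qcount (Conj f g) = qcount f + qcount g"
| "qcount (Disj f g) = qcount f + qcount g"
| "qcount (Ex x f) = Suc (qcount f)"
| "qcount (All x f) = Suc (qcount f)"

fun qfree :: "form \<Rightarrow> bool" where
  "qfree (Less s t) = True"
| "qfree (Eq s t) = True"
| "qfree (S t) = True"
| "qfree (Neg f) = qfree f"
| "qfree (Conj f g) = (qfree f \<and> qfree g)"
| "qfree (Disj f g) = (qfree f \<and> qfree g)"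
| "qfree (Ex x f) = False"
| "qfree (All x f) = False"

text \<open>Prenex form whose quantifier prefix strictly alternates and whose
last (innermost) quantifier is a universal one.
ends_all f: f = All x g with g quantifier-free or g = Ex ... (alternating);
ends_ex f: f = Ex x g with g of the form ends_all.\<close>
fun ends_all :: "form \<Rightarrow> bool" and ends_ex :: "form \<Rightarrow> bool" where
  "ends_all (All x g) = (qfree g \<or> ends_ex g)"
| "ends_all (Less s t) = False"
| "ends_all (Eq s t) = False"
| "ends_all (S t) = False"
| "ends_all (Neg f) = False"
| "ends_all (Conj f g) = False"
| "ends_all (Disj f g) = False"
| "ends_all (Ex x f) = False"
| "ends_ex (Ex x g) = ends_all g"
| "ends_ex (Less s t) = False"
| "ends_ex (Eq s t) = False"
| "ends_ex (S t) = False"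
| "ends_ex (Neg f) = False"
| "ends_ex (Conj f g) = False"
| "ends_ex (Disj f g) = False"
| "ends_ex (All x f) = False"

definition alt_prenex_ending_all :: "form \<Rightarrow> bool" where
  "alt_prenex_ending_all f \<longleftrightarrow> ends_all f \<or> ends_ex f"

text \<open>Semantics in B_w: universe {1..length w}, min = 1, max = length w,
S = {i. w_i = 1}, i.e. w ! (i - 1) = True.\<close>
fun teval :: "bool list \<Rightarrow> (nat \<Rightarrow> nat) \<Rightarrow> fterm \<Rightarrow> nat" where
  "teval w \<sigma> (Var i) = \<sigma> i"
| "teval w \<sigma> Min = 1"
| "teval w \<sigma> Max = length w"

fun holds :: "bool list \<Rightarrow> (nat \<Rightarrow> nat) \<Rightarrow> form \<Rightarrow> bool" where
  "holds w \<sigma> (Less s t) = (teval w \<sigma> s < teval w \<sigma> t)"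
| "holds w \<sigma> (Eq s t) = (teval w \<sigma> s = teval w \<sigma> t)"
| "holds w \<sigma> (S t) = (let i = teval w \<sigma> t in 1 \<le> i \<and> i \<le> length w \<and> w ! (i - 1))"
| "holds w \<sigma> (Neg f) = (\<not> holds w \<sigma> f)"
| "holds w \<sigma> (Conj f g) = (holds w \<sigma> f \<and> holds w \<sigma> g)"
| "holds w \<sigma> (Disj f g) = (holds w \<sigma> f \<or> holds w \<sigma> g)"
| "holds w \<sigma> (Ex x f) = (\<exists>a\<in>{1..length w}. holds w (\<sigma>(x := a)) f)"
| "holds w \<sigma> (All x f) = (\<forall>a\<in>{1..length w}. holds w (\<sigma>(x := a)) f)"

text \<open>Truth of a sentence in B_w (the assignment is irrelevant for sentences).\<close>
definition models :: "bool list \<Rightarrow> form \<Rightarrow> bool" where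
  "models w f \<longleftrightarrow> holds w (\<lambda>_. 1) f"

end

(*
  Upper bound: fix a position where w and w' differ and say that it carries the bit of w.
  A position is pinned down by distance statements "l + m < h". Such a statement follows from
  an existential split point a with l + m1 < a and a + m2 < h (m = m1 + m2 + 1), and, once
  l < h, from the universal statement that every c in (l, h] satisfies l + c1 < c or
  c + c2 < h (m = c1 + c2). Alternating the two steps doubles the reachable distance with
  every quantifier. The two subformulas of a step quantify the same variables and are kept
  apart by guards saying on which side the new point lies, so the sentence is prenex with a
  strictly alternating prefix of about log2 n quantifiers.

  Lower bound: for t = 2^r and n >= 2t, the strings of length n whose only 1 sits at t,
  respectively t + 1, satisfy the same sentences of quantifier rank r. In the
  Ehrenfeucht-Fraisse game Duplicator keeps signed distances between pebbles equal or both
  beyond 2^r in absolute value; the marked position is never pebbled, and distances to it need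
  only threshold 2^r - 1 while distances across it need 2^r + 1. The marked positions lie at
  distance 2^r - 1 and 2^r from min, which this sharper bookkeeping tolerates; taking
  r = floor(log2 n) - 1 gives the bound.
*)

theory Submission
  imports Defs
begin

section \<open>Alternating quantifier prefixes\<close>

lemma holds_agree:
  "(\<forall>x\<in>free_vars f. \<sigma> x = \<tau> x) \<Longrightarrow> holds w \<sigma> f = holds w \<tau> f"
proof (induction f arbitrary: \<sigma> \<tau>)
  case (Less s t) thus ?case by (cases s; cases t) auto
next
  case (Eq s t) thus ?case by (cases s; cases t) auto
next
  case (S t) thus ?case by (cases t) auto
next
  case (Ex x f)
  have "holds w (\<sigma>(x := a)) f = holds w (\<tau>(x := a)) f" for a
    by (rule Ex.IH) (use Ex.prems in auto)
  thus ?case by simp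
next
  case (All x f)
  have "holds w (\<sigma>(x := a)) f = holds w (\<tau>(x := a)) f" for a
    by (rule All.IH) (use All.prems in auto)
  thus ?case by simp
next
  case (Conj f g)
  thus ?case by (metis Un_iff free_vars.simps(5) holds.simps(5))
next
  case (Disj f g)
  thus ?case by (metis Un_iff free_vars.simps(6) holds.simps(6))
qed simp

fun prefix :: "nat \<Rightarrow> bool \<Rightarrow> form \<Rightarrow> form" where
  "prefix 0 Q M = M"
| "prefix (Suc k) Q M = (if Q then Ex (Suc k) (prefix k False M) else All (Suc k) (prefix k True M))"

lemma holds_prefix_Suc:
  "holds w \<sigma> (prefix (Suc k) True M) = (\<exists>a\<in>{1..length w}. holds w (\<sigma>(Suc k := a)) (prefix k False M))"
  "holds w \<sigma> (prefix (Suc k) False M) = (\<forall>a\<in>{1..length w}. holds w (\<sigma>(Suc k := a)) (prefix k True M))"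
  by simp_all

lemma prefix_cong:
  assumes "\<And>\<tau>. \<forall>x>k. \<tau> x = \<sigma> x \<Longrightarrow> holds w \<tau> M = holds w \<tau> M'"
  shows "holds w \<sigma> (prefix k Q M) = holds w \<sigma> (prefix k Q M')"
  using assms
proof (induction k arbitrary: \<sigma> Q)
  case 0
  thus ?case by simp
next
  case (Suc k)
  have "holds w (\<sigma>(Suc k := a)) (prefix k Q' M) = holds w (\<sigma>(Suc k := a)) (prefix k Q' M')" for a Q'
    by (rule Suc.IH) (use Suc.prems in auto)
  thus ?case by simp
qed

lemma holds_prefix_outer:
  assumes "w \<noteq> []" and "free_vars M \<subseteq> {k<..}"
  shows "holds w \<sigma> (prefix k Q M) = holds w \<sigma> M"
  using assms(2)
proof (induction k arbitrary: \<sigma> Q)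
  case 0
  thus ?case by simp
next
  case (Suc k)
  have "holds w (\<sigma>(Suc k := a)) (prefix k Q' M) = holds w \<sigma> M" for a Q'
  proof -
    have "holds w (\<sigma>(Suc k := a)) (prefix k Q' M) = holds w (\<sigma>(Suc k := a)) M"
      by (rule Suc.IH) (use Suc.prems in auto)
    also have "\<dots> = holds w \<sigma> M"
      by (rule holds_agree) (use Suc.prems in auto)
    finally show ?thesis .
  qed
  moreover have "{1..length w} \<noteq> {}"
    using assms(1) by (cases w) auto
  ultimately show ?case by auto
qed

lemma holds_outer_agree:
  "free_vars G \<subseteq> {k<..} \<Longrightarrow> \<forall>x>k. \<tau> x = \<sigma> x \<Longrightarrow> holds w \<tau> G = holds w \<sigma> G"
  by (rule holds_agree) auto

lemma prefix_cong_guards: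
  assumes "free_vars G1 \<subseteq> {k<..}" "free_vars G2 \<subseteq> {k<..}"
    and "\<And>\<tau>. holds w \<tau> G1 = holds w \<sigma> G1 \<Longrightarrow> holds w \<tau> G2 = holds w \<sigma> G2 \<Longrightarrow>
           holds w \<tau> M = holds w \<tau> M'"
  shows "holds w \<sigma> (prefix k Q M) = holds w \<sigma> (prefix k Q M')"
  by (rule prefix_cong) (use assms holds_outer_agree in blast)

definition imp :: "form \<Rightarrow> form \<Rightarrow> form" where
  "imp A B = Disj (Neg A) B"

lemma holds_prefix_conj_outer:
  assumes "w \<noteq> []" and G: "free_vars G \<subseteq> {k<..}"
  shows "holds w \<sigma> (prefix k Q (Conj G M)) = (holds w \<sigma> G \<and> holds w \<sigma> (prefix k Q M))"
proof (cases "holds w \<sigma> G")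
  case True
  have "holds w \<sigma> (prefix k Q (Conj G M)) = holds w \<sigma> (prefix k Q M)"
    by (rule prefix_cong_guards[OF G G]; use True in auto)
  thus ?thesis using True by simp
next
  case False
  have "holds w \<sigma> (prefix k Q (Conj G M)) = holds w \<sigma> (prefix k Q G)"
    by (rule prefix_cong_guards[OF G G]; use False in auto)
  thus ?thesis using False holds_prefix_outer[OF assms] by simp
qed

lemma holds_prefix_imp_outer:
  assumes "w \<noteq> []" and G: "free_vars G \<subseteq> {k<..}"
  shows "holds w \<sigma> (prefix k Q (imp G M)) = (holds w \<sigma> G \<longrightarrow> holds w \<sigma> (prefix k Q M))"
proof (cases "holds w \<sigma> G")
  case True
  have "holds w \<sigma> (prefix k Q (imp G M)) = holds w \<sigma> (prefix k Q M)"
    by (rule prefix_cong_guards[OF G G]; use True in \<open>auto simp: imp_def\<close>)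
  thus ?thesis using True by simp
next
  case False
  have "holds w \<sigma> (prefix k Q (imp G M)) = holds w \<sigma> (prefix k Q (Neg G))"
    by (rule prefix_cong_guards[OF G G]; use False in \<open>auto simp: imp_def\<close>)
  thus ?thesis using False holds_prefix_outer[OF assms(1)] G by simp
qed

text \<open>Matrices guarded by mutually exclusive conditions on the variables above \<open>k\<close> can share
the prefix: at most one of them is ever consulted.\<close>

lemma holds_prefix_conj_exclusive:
  assumes "w \<noteq> []" and G1: "free_vars G1 \<subseteq> {k<..}" and G2: "free_vars G2 \<subseteq> {k<..}"
    and excl: "\<not> (holds w \<sigma> G1 \<and> holds w \<sigma> G2)"
  shows "holds w \<sigma> (prefix k Q (Conj (imp G1 A) (imp G2 B))) =
           ((holds w \<sigma> G1 \<longrightarrow> holds w \<sigma> (prefix k Q A)) \<and> (holds w \<sigma> G2 \<longrightarrow> holds w \<sigma> (prefix k Q B)))"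
proof (cases "holds w \<sigma> G1")
  case True
  have "holds w \<sigma> (prefix k Q (Conj (imp G1 A) (imp G2 B))) = holds w \<sigma> (prefix k Q (imp G1 A))"
    by (rule prefix_cong_guards[OF G1 G2]; use True excl in \<open>auto simp: imp_def\<close>)
  thus ?thesis using True excl holds_prefix_imp_outer[OF assms(1) G1] by simp
next
  case False
  have "holds w \<sigma> (prefix k Q (Conj (imp G1 A) (imp G2 B))) = holds w \<sigma> (prefix k Q (imp G2 B))"
    by (rule prefix_cong_guards[OF G1 G2]; use False in \<open>auto simp: imp_def\<close>)
  thus ?thesis using False holds_prefix_imp_outer[OF assms(1) G2] by simp
qed

lemma holds_prefix_disj_exclusive:
  assumes "w \<noteq> []" and G1: "free_vars G1 \<subseteq> {k<..}" and G2: "free_vars G2 \<subseteq> {k<..}"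
    and excl: "\<not> (holds w \<sigma> G1 \<and> holds w \<sigma> G2)"
  shows "holds w \<sigma> (prefix k Q (Disj (Conj G1 A) (Conj G2 B))) =
           ((holds w \<sigma> G1 \<and> holds w \<sigma> (prefix k Q A)) \<or> (holds w \<sigma> G2 \<and> holds w \<sigma> (prefix k Q B)))"
proof (cases "holds w \<sigma> G1")
  case True
  have "holds w \<sigma> (prefix k Q (Disj (Conj G1 A) (Conj G2 B))) = holds w \<sigma> (prefix k Q (Conj G1 A))"
    by (rule prefix_cong_guards[OF G1 G2]; use True excl in auto)
  thus ?thesis using True excl holds_prefix_conj_outer[OF assms(1) G1] by simp
next
  case False
  have "holds w \<sigma> (prefix k Q (Disj (Conj G1 A) (Conj G2 B))) = holds w \<sigma> (prefix k Q (Conj G2 B))"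
    by (rule prefix_cong_guards[OF G1 G2]; use False in auto)
  thus ?thesis using False holds_prefix_conj_outer[OF assms(1) G2] by simp
qed

section \<open>Distance formulas\<close>

definition TT :: form where
  "TT = Eq Min Min"

text \<open>Under its prefix, \<open>far_ex k m l h\<close> expresses \<open>l + m < h\<close> and \<open>far_all k m l h\<close>
expresses \<open>h \<le> l \<or> l + m < h\<close>, for \<open>m\<close> up to the respective capacity. The existential step
picks a split point \<open>a\<close> of \<open>(l, h)\<close>; the universal step checks that no point \<open>c\<close> of \<open>(l, h]\<close> is
close to both ends. Both subformulas of a step reuse the same quantified variables; guards on
the position of the new point keep them apart, so each quantifier doubles the capacity. Even
for \<open>m = 0\<close> the existential step quantifies a point (of \<open>(l, h]\<close>), so that the two disjuncts of
a universal step always carry exclusive guards.\<close>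

fun far_ex_cap :: "nat \<Rightarrow> nat" and far_all_cap :: "nat \<Rightarrow> nat" where
  "far_ex_cap 0 = 0"
| "far_ex_cap (Suc k) = 2 * far_all_cap k + 1"
| "far_all_cap 0 = 0"
| "far_all_cap (Suc k) = 2 * far_ex_cap k"

fun far_ex :: "nat \<Rightarrow> nat \<Rightarrow> fterm \<Rightarrow> fterm \<Rightarrow> form"
  and far_all :: "nat \<Rightarrow> nat \<Rightarrow> fterm \<Rightarrow> fterm \<Rightarrow> form" where
  "far_ex 0 m l h = Less l h"
| "far_ex (Suc k) m l h =
     Conj (Conj (Less l (Var (Suc k))) (if m = 0 then Neg (Less h (Var (Suc k))) else Less (Var (Suc k)) h))
       (if m = 0 then TT
        else Conj (far_all k (min (far_all_cap k) (m - 1)) l (Var (Suc k)))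
                  (far_all k (m - 1 - min (far_all_cap k) (m - 1)) (Var (Suc k)) h))"
| "far_all 0 m l h = TT"
| "far_all (Suc k) m l h =
     imp (Conj (Less l (Var (Suc k))) (Neg (Less h (Var (Suc k)))))
       (Disj (far_ex k (min (far_ex_cap k) m) l (Var (Suc k)))
             (far_ex k (m - min (far_ex_cap k) m) (Var (Suc k)) h))"

lemma holds_prefix_far_all_pair:
  assumes w: "w \<noteq> []" and vars: "tvars l \<union> tvars v \<union> tvars h \<subseteq> {k<..}"
  shows "holds w \<sigma> (prefix k False (Conj (far_all k m1 l v) (far_all k m2 v h))) =
           (holds w \<sigma> (prefix k False (far_all k m1 l v)) \<and> holds w \<sigma> (prefix k False (far_all k m2 v h)))"
proof (cases k)
  case 0
  thus ?thesis by simp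
next
  case (Suc i)
  define c where "c = Var (Suc i)"
  define G1 where "G1 = Conj (Less l c) (Neg (Less v c))"
  define G2 where "G2 = Conj (Less v c) (Neg (Less h c))"
  have fv: "free_vars G1 \<subseteq> {i<..}" "free_vars G2 \<subseteq> {i<..}"
    using vars Suc by (auto simp: G1_def G2_def c_def)
  have excl: "\<not> (holds w \<tau> G1 \<and> holds w \<tau> G2)" for \<tau>
    by (auto simp: G1_def G2_def)
  note split = holds_prefix_conj_exclusive[OF w fv excl] holds_prefix_imp_outer[OF w fv(1)]
    holds_prefix_imp_outer[OF w fv(2)]
  show ?thesis
    using Suc by (simp add: split flip: c_def G1_def G2_def) blast
qed

lemma holds_prefix_far_ex_pair:
  assumes w: "w \<noteq> []" and vars: "tvars l \<union> tvars c \<union> tvars h \<subseteq> {k<..}"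
  shows "holds w \<sigma> (prefix k True (Disj (far_ex k m1 l c) (far_ex k m2 c h))) =
           (holds w \<sigma> (prefix k True (far_ex k m1 l c)) \<or> holds w \<sigma> (prefix k True (far_ex k m2 c h)))"
proof (cases k)
  case 0
  thus ?thesis by simp
next
  case (Suc i)
  define d where "d = Var (Suc i)"
  define G1 where "G1 = Conj (Less l d) (if m1 = 0 then Neg (Less c d) else Less d c)"
  define G2 where "G2 = Conj (Less c d) (if m2 = 0 then Neg (Less h d) else Less d h)"
  have fv: "free_vars G1 \<subseteq> {i<..}" "free_vars G2 \<subseteq> {i<..}"
    using vars Suc by (auto simp: G1_def G2_def d_def)
  have excl: "\<not> (holds w \<tau> G1 \<and> holds w \<tau> G2)" for \<tau>
    by (auto simp: G1_def G2_def)
  obtain A B where AB: "far_ex k m1 l c = Conj G1 A" "far_ex k m2 c h = Conj G2 B"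
    unfolding Suc G1_def G2_def d_def far_ex.simps by blast
  show ?thesis
    unfolding AB unfolding Suc holds_prefix_Suc
    by (simp add: holds_prefix_disj_exclusive[OF w fv excl] holds_prefix_conj_outer[OF w fv(1)]
      holds_prefix_conj_outer[OF w fv(2)] bex_disj_distrib)
qed

lemma teval_fun_upd [simp]: "x \<notin> tvars t \<Longrightarrow> teval w (\<sigma>(x := a)) t = teval w \<sigma> t"
  by (cases t) auto

lemma ex_split_point:
  fixes l h m1 m2 :: nat
  assumes "h \<le> n"
  shows "(\<exists>a\<in>{1..n}. l < a \<and> a < h \<and> (a \<le> l \<or> l + m1 < a) \<and> (h \<le> a \<or> a + m2 < h)) \<longleftrightarrow>
           l + (m1 + m2 + 1) < h"
proof
  assume "l + (m1 + m2 + 1) < h"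
  thus "\<exists>a\<in>{1..n}. l < a \<and> a < h \<and> (a \<le> l \<or> l + m1 < a) \<and> (h \<le> a \<or> a + m2 < h)"
    using assms by (intro bexI[of _ "l + m1 + 1"]) auto
qed auto

lemma all_points_far:
  fixes l h c1 c2 :: nat
  assumes "0 < c1 \<or> c2 = 0"
  shows "(\<forall>c. l < c \<and> c \<le> h \<longrightarrow> l + c1 < c \<or> c + c2 < h) \<longleftrightarrow> h \<le> l \<or> l + (c1 + c2) < h"
proof
  assume all: "\<forall>c. l < c \<and> c \<le> h \<longrightarrow> l + c1 < c \<or> c + c2 < h"
  show "h \<le> l \<or> l + (c1 + c2) < h"
  proof (rule ccontr)
    assume "\<not> (h \<le> l \<or> l + (c1 + c2) < h)"
    moreover have "l < max (l + 1) (h - c2) \<and> max (l + 1) (h - c2) \<le> h" using calculation by auto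
    ultimately show False using all[rule_format, of "max (l + 1) (h - c2)"] assms by auto
  qed
qed auto

lemma holds_far_ex_Suc:
  assumes w: "w \<noteq> []"
    and far_all_k: "\<And>m \<sigma> l h. m \<le> far_all_cap k \<Longrightarrow> tvars l \<union> tvars h \<subseteq> {k<..} \<Longrightarrow>
        teval w \<sigma> h \<le> length w \<Longrightarrow> holds w \<sigma> (prefix k False (far_all k m l h)) =
        (teval w \<sigma> h \<le> teval w \<sigma> l \<or> teval w \<sigma> l + m < teval w \<sigma> h)"
    and m: "m \<le> far_ex_cap (Suc k)" and vars: "tvars l \<union> tvars h \<subseteq> {Suc k<..}"
    and h: "teval w \<sigma> h \<le> length w"
  shows "holds w \<sigma> (prefix (Suc k) True (far_ex (Suc k) m l h)) = (teval w \<sigma> l + m < teval w \<sigma> h)"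
proof -
  define v where "v = Var (Suc k)"
  define G where "G = Conj (Less l v) (if m = 0 then Neg (Less h v) else Less v h)"
  define m1 where "m1 = min (far_all_cap k) (m - 1)"
  define m2 where "m2 = m - 1 - m1"
  have fvG: "free_vars G \<subseteq> {k<..}" using vars by (auto simp: G_def v_def)
  have fresh: "Suc k \<notin> tvars l" "Suc k \<notin> tvars h" using vars by auto
  let ?l = "teval w \<sigma> l" and ?h = "teval w \<sigma> h" and ?\<sigma> = "\<lambda>a. \<sigma>(Suc k := a)"
  have "far_ex (Suc k) m l h = Conj G (if m = 0 then TT else Conj (far_all k m1 l v) (far_all k m2 v h))"
    unfolding G_def v_def m1_def m2_def by (simp only: far_ex.simps)
  hence unfold: "holds w \<sigma> (prefix (Suc k) True (far_ex (Suc k) m l h)) =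
      (\<exists>a\<in>{1..length w}. holds w (?\<sigma> a) G \<and>
         holds w (?\<sigma> a) (prefix k False (if m = 0 then TT else Conj (far_all k m1 l v) (far_all k m2 v h))))"
    by (simp only: holds_prefix_Suc holds_prefix_conj_outer[OF w fvG])
  show ?thesis
  proof (cases "m = 0")
    case True
    have "holds w \<sigma> (prefix (Suc k) True (far_ex (Suc k) m l h)) = (\<exists>a\<in>{1..length w}. ?l < a \<and> \<not> ?h < a)"
      unfolding unfold using True fresh by (simp add: holds_prefix_outer[OF w] G_def v_def TT_def)
    also have "\<dots> = (?l + m < ?h)"
      using True h by (auto intro: bexI[of _ ?h])
    finally show ?thesis .
  next
    case False
    have fv: "tvars l \<union> tvars v \<union> tvars h \<subseteq> {k<..}" using vars by (auto simp: v_def)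
    have bounds: "m1 \<le> far_all_cap k" "m2 \<le> far_all_cap k" "m = m1 + m2 + 1"
      using m False by (auto simp: m1_def m2_def)
    have pair: "holds w (?\<sigma> a) (prefix k False (Conj (far_all k m1 l v) (far_all k m2 v h))) =
        ((a \<le> ?l \<or> ?l + m1 < a) \<and> (?h \<le> a \<or> a + m2 < ?h))" if "a \<le> length w" for a
    proof -
      have "teval w (?\<sigma> a) v \<le> length w" "teval w (?\<sigma> a) h \<le> length w"
        using that h fresh by (simp_all add: v_def)
      thus ?thesis
        using fv fresh by (simp add: holds_prefix_far_all_pair[OF w fv] far_all_k[OF bounds(1)]
            far_all_k[OF bounds(2)]) (simp add: v_def)
    qed
    have "holds w \<sigma> (prefix (Suc k) True (far_ex (Suc k) m l h)) =
        (\<exists>a\<in>{1..length w}. ?l < a \<and> a < ?h \<and> (a \<le> ?l \<or> ?l + m1 < a) \<and> (?h \<le> a \<or> a + m2 < ?h))"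
      unfolding unfold using False fresh by (intro bex_cong refl) (simp add: pair[unfolded v_def] G_def v_def)
    also have "\<dots> = (?l + m < ?h)"
      using ex_split_point[OF h] bounds(3) by simp
    finally show ?thesis .
  qed
qed

lemma holds_far_all_Suc:
  assumes w: "w \<noteq> []"
    and far_ex_k: "\<And>m \<sigma> l h. m \<le> far_ex_cap k \<Longrightarrow> tvars l \<union> tvars h \<subseteq> {k<..} \<Longrightarrow>
        teval w \<sigma> h \<le> length w \<Longrightarrow>
        holds w \<sigma> (prefix k True (far_ex k m l h)) = (teval w \<sigma> l + m < teval w \<sigma> h)"
    and m: "m \<le> far_all_cap (Suc k)" and vars: "tvars l \<union> tvars h \<subseteq> {Suc k<..}"
    and h: "teval w \<sigma> h \<le> length w"
  shows "holds w \<sigma> (prefix (Suc k) False (far_all (Suc k) m l h)) =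
           (teval w \<sigma> h \<le> teval w \<sigma> l \<or> teval w \<sigma> l + m < teval w \<sigma> h)"
proof -
  define c where "c = Var (Suc k)"
  define G where "G = Conj (Less l c) (Neg (Less h c))"
  define c1 where "c1 = min (far_ex_cap k) m"
  define c2 where "c2 = m - c1"
  have fvG: "free_vars G \<subseteq> {k<..}" using vars by (auto simp: G_def c_def)
  have fv: "tvars l \<union> tvars c \<union> tvars h \<subseteq> {k<..}" using vars by (auto simp: c_def)
  have fresh: "Suc k \<notin> tvars l" "Suc k \<notin> tvars h" using vars by auto
  have bounds: "c1 \<le> far_ex_cap k" "c2 \<le> far_ex_cap k" "m = c1 + c2"
    using m by (auto simp: c1_def c2_def)
  have nondeg: "0 < c1 \<or> c2 = 0"
    using m by (cases k) (auto simp: c1_def c2_def)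
  let ?l = "teval w \<sigma> l" and ?h = "teval w \<sigma> h" and ?\<sigma> = "\<lambda>a. \<sigma>(Suc k := a)"
  have "far_all (Suc k) m l h = imp G (Disj (far_ex k c1 l c) (far_ex k c2 c h))"
    unfolding G_def c_def c1_def c2_def by (simp only: far_all.simps)
  hence "holds w \<sigma> (prefix (Suc k) False (far_all (Suc k) m l h)) =
      (\<forall>a\<in>{1..length w}. holds w (?\<sigma> a) G \<longrightarrow>
         holds w (?\<sigma> a) (prefix k True (far_ex k c1 l c)) \<or> holds w (?\<sigma> a) (prefix k True (far_ex k c2 c h)))"
    by (simp only: holds_prefix_Suc holds_prefix_imp_outer[OF w fvG] holds_prefix_far_ex_pair[OF w fv])
  also have "\<dots> = (\<forall>a\<in>{1..length w}. ?l < a \<and> a \<le> ?h \<longrightarrow> ?l + c1 < a \<or> a + c2 < ?h)"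
  proof (intro ball_cong refl)
    fix a assume "a \<in> {1..length w}"
    hence "teval w (?\<sigma> a) c \<le> length w" "teval w (?\<sigma> a) h \<le> length w"
      using h fresh by (simp_all add: c_def)
    thus "(holds w (?\<sigma> a) G \<longrightarrow>
           holds w (?\<sigma> a) (prefix k True (far_ex k c1 l c)) \<or> holds w (?\<sigma> a) (prefix k True (far_ex k c2 c h))) =
          (?l < a \<and> a \<le> ?h \<longrightarrow> ?l + c1 < a \<or> a + c2 < ?h)"
      using fv fresh by (simp add: far_ex_k[OF bounds(1)] far_ex_k[OF bounds(2)]) (auto simp: G_def c_def)
  qed
  also have "\<dots> = (\<forall>a. ?l < a \<and> a \<le> ?h \<longrightarrow> ?l + c1 < a \<or> a + c2 < ?h)"
    using h by auto
  also have "\<dots> = (?h \<le> ?l \<or> ?l + m < ?h)"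
    using all_points_far[OF nondeg] bounds(3) by simp
  finally show ?thesis .
qed

lemma holds_far:
  assumes w: "w \<noteq> []"
  shows "(\<forall>m \<sigma> l h. m \<le> far_ex_cap k \<longrightarrow> tvars l \<union> tvars h \<subseteq> {k<..} \<longrightarrow> teval w \<sigma> h \<le> length w \<longrightarrow>
            holds w \<sigma> (prefix k True (far_ex k m l h)) = (teval w \<sigma> l + m < teval w \<sigma> h)) \<and>
         (\<forall>m \<sigma> l h. m \<le> far_all_cap k \<longrightarrow> tvars l \<union> tvars h \<subseteq> {k<..} \<longrightarrow> teval w \<sigma> h \<le> length w \<longrightarrow>
            holds w \<sigma> (prefix k False (far_all k m l h)) =
            (teval w \<sigma> h \<le> teval w \<sigma> l \<or> teval w \<sigma> l + m < teval w \<sigma> h))"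
proof (induction k)
  case 0
  show ?case by (auto simp: TT_def)
next
  case (Suc k)
  show ?case
    using holds_far_ex_Suc[OF w] holds_far_all_Suc[OF w] Suc.IH by blast
qed

lemma free_vars_far:
  "free_vars (far_ex k m l h) \<subseteq> {1..k} \<union> tvars l \<union> tvars h \<and>
   free_vars (far_all k m l h) \<subseteq> {1..k} \<union> tvars l \<union> tvars h"
proof (induction k arbitrary: m l h)
  case 0
  show ?case by (simp add: TT_def)
next
  case (Suc k)
  have "free_vars (far_all k m' l' (Var (Suc k))) \<subseteq> {1..Suc k} \<union> tvars l'"
    "free_vars (far_all k m' (Var (Suc k)) h') \<subseteq> {1..Suc k} \<union> tvars h'"
    "free_vars (far_ex k m' l' (Var (Suc k))) \<subseteq> {1..Suc k} \<union> tvars l'"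
    "free_vars (far_ex k m' (Var (Suc k)) h') \<subseteq> {1..Suc k} \<union> tvars h'" for m' l' h'
    using Suc.IH[of m' l' "Var (Suc k)"] Suc.IH[of m' "Var (Suc k)" h'] by auto
  thus ?case by (simp add: TT_def imp_def) blast
qed

lemma qfree_far: "qfree (far_ex k m l h) \<and> qfree (far_all k m l h)"
  by (induction k arbitrary: m l h) (simp_all add: TT_def imp_def)

lemma far_all_cap_ge: "2 ^ k \<le> far_all_cap (k + 2)"
proof (induction k rule: less_induct)
  case (less k)
  show ?case
  proof (cases "k < 2")
    case True
    thus ?thesis by (auto simp: less_Suc_eq numeral_eq_Suc)
  next
    case False
    then obtain j where k: "k = j + 2" by (metis add.commute le_Suc_ex not_less)
    have "far_all_cap (k + 2) = 4 * far_all_cap (j + 2) + 2"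
      by (simp add: k numeral_eq_Suc)
    thus ?thesis using less.IH[of j] k by simp
  qed
qed

lemma free_vars_prefix: "free_vars (prefix k Q M) = free_vars M - {1..k}"
  by (induction k arbitrary: Q) auto

lemma qcount_prefix: "qfree M \<Longrightarrow> qcount (prefix k Q M) = k"
proof (induction k arbitrary: Q)
  case 0
  thus ?case by (induction M) auto
qed auto

lemma prefix_alternating:
  "qfree M \<Longrightarrow> 0 < k \<Longrightarrow> Q = even k \<Longrightarrow> (if Q then ends_ex else ends_all) (prefix k Q M)"
proof (induction k arbitrary: Q)
  case (Suc k)
  thus ?case by (cases k) auto
qed simp

section \<open>The upper bound\<close>

definition lit :: "bool \<Rightarrow> fterm \<Rightarrow> form" where
  "lit b t = (if b then S t else Neg (S t))"

lemma holds_lit: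
  "1 \<le> teval w \<sigma> t \<Longrightarrow> teval w \<sigma> t \<le> length w \<Longrightarrow> holds w \<sigma> (lit b t) = (w ! (teval w \<sigma> t - 1) = b)"
  by (auto simp: lit_def)

definition bit_matrix :: "nat \<Rightarrow> bool \<Rightarrow> nat \<Rightarrow> nat \<Rightarrow> form" where
  "bit_matrix k b m1 m2 =
     Conj (lit b (Var (Suc k)))
       (Conj (Conj (Less Min (Var (Suc k))) (Less (Var (Suc k)) Max))
             (Conj (far_all k m1 Min (Var (Suc k))) (far_all k m2 (Var (Suc k)) Max)))"

lemma models_bit_matrix:
  assumes w: "w \<noteq> []" and m: "m1 \<le> far_all_cap k" "m2 \<le> far_all_cap k"
  shows "models w (prefix (Suc k) True (bit_matrix k b m1 m2)) =
           (\<exists>a\<in>{1..length w}. w ! (a - 1) = b \<and> 1 + m1 < a \<and> a + m2 < length w)"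
proof -
  define v where "v = Var (Suc k)"
  define G where "G = Conj (Less Min v) (Less v Max)"
  have fv: "free_vars (lit b v) \<subseteq> {k<..}" "free_vars G \<subseteq> {k<..}"
    "tvars Min \<union> tvars v \<union> tvars Max \<subseteq> {k<..}"
    by (auto simp: lit_def G_def v_def)
  note far_all_sem = conjunct2[OF holds_far[OF w], rule_format]
  let ?\<sigma> = "\<lambda>a. (\<lambda>_. 1)(Suc k := a)"
  have "models w (prefix (Suc k) True (bit_matrix k b m1 m2)) =
      (\<exists>a\<in>{1..length w}. holds w (?\<sigma> a) (lit b v) \<and> holds w (?\<sigma> a) G \<and>
         holds w (?\<sigma> a) (prefix k False (far_all k m1 Min v)) \<and>
         holds w (?\<sigma> a) (prefix k False (far_all k m2 v Max)))"
    unfolding models_def bit_matrix_def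
    by (simp only: holds_prefix_Suc holds_prefix_conj_outer[OF w fv(1)] holds_prefix_conj_outer[OF w fv(2)]
        holds_prefix_far_all_pair[OF w fv(3)] flip: v_def G_def)
  also have "\<dots> = (\<exists>a\<in>{1..length w}. w ! (a - 1) = b \<and> 1 < a \<and> a < length w \<and>
      (a \<le> 1 \<or> 1 + m1 < a) \<and> (length w \<le> a \<or> a + m2 < length w))"
    using fv(3) by (intro bex_cong refl) (auto simp: holds_lit far_all_sem[OF m(1)] far_all_sem[OF m(2)] G_def v_def)
  also have "\<dots> = (\<exists>a\<in>{1..length w}. w ! (a - 1) = b \<and> 1 + m1 < a \<and> a + m2 < length w)"
    by (intro bex_cong refl) auto
  finally show ?thesis .
qed

lemma bit_sentence_syntax:
  assumes "even (Suc k)"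
  shows "sentence (prefix (Suc k) True (bit_matrix k b m1 m2))"
    and "qcount (prefix (Suc k) True (bit_matrix k b m1 m2)) = Suc k"
    and "alt_prenex_ending_all (prefix (Suc k) True (bit_matrix k b m1 m2))"
proof -
  have fv: "free_vars (bit_matrix k b m1 m2) \<subseteq> {1..Suc k}"
    using free_vars_far[of k m1 Min "Var (Suc k)"] free_vars_far[of k m2 "Var (Suc k)" Max]
    by (auto simp: bit_matrix_def lit_def)
  have qf: "qfree (bit_matrix k b m1 m2)"
    using qfree_far by (simp add: bit_matrix_def lit_def)
  show "sentence (prefix (Suc k) True (bit_matrix k b m1 m2))"
    using fv by (auto simp: sentence_def free_vars_prefix)
  show "qcount (prefix (Suc k) True (bit_matrix k b m1 m2)) = Suc k"
    using qcount_prefix[OF qf] .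
  show "alt_prenex_ending_all (prefix (Suc k) True (bit_matrix k b m1 m2))"
    using prefix_alternating[OF qf, of "Suc k" True] assms by (simp add: alt_prenex_ending_all_def)
qed

lemma exists_pow2_ge_log:
  assumes "1 \<le> n"
  obtains L where "n \<le> 2 ^ L" "real L \<le> log 2 (real n) + 1"
proof -
  define L where "L = (LEAST L. n \<le> 2 ^ L)"
  have "\<exists>L. n \<le> 2 ^ L" using less_exp[of n] by (meson less_imp_le)
  hence le: "n \<le> 2 ^ L" unfolding L_def by (rule LeastI_ex)
  have "real L \<le> log 2 (real n) + 1"
  proof (cases L)
    case (Suc L')
    have "\<not> n \<le> 2 ^ L'" using not_less_Least[of L' "\<lambda>L. n \<le> 2 ^ L"] Suc unfolding L_def by auto
    hence "real L' < log 2 (real n)" using less_log2_of_power by simp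
    thus ?thesis using Suc by simp
  qed (use assms in simp)
  with le that show ?thesis by blast
qed

lemma bit_defining_sentence:
  assumes i: "i < n"
  shows "\<exists>\<phi>. sentence \<phi> \<and> real (qcount \<phi>) \<le> log 2 (real n) + 5 \<and> alt_prenex_ending_all \<phi> \<and>
           (\<forall>v. length v = n \<longrightarrow> models v \<phi> = (v ! i = b))"
proof (cases "i = 0 \<or> i = n - 1")
  case True
  define t where "t = (if i = 0 then Min else Max)"
  define \<phi> where "\<phi> = All 1 (lit b t)"
  have "models v \<phi> = (v ! i = b)" if "length v = n" for v
  proof -
    have "teval v \<sigma> t = Suc i" for \<sigma> using True that i by (auto simp: t_def)
    hence "holds v \<sigma> (lit b t) = (v ! i = b)" for \<sigma> using that i by (simp add: holds_lit)
    moreover have "{1..length v} \<noteq> {}" using that i by auto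
    ultimately show ?thesis by (auto simp: \<phi>_def models_def)
  qed
  moreover have "sentence \<phi>" "alt_prenex_ending_all \<phi>" "qcount \<phi> = 1"
    by (auto simp: \<phi>_def t_def lit_def sentence_def alt_prenex_ending_all_def)
  moreover have "0 \<le> log 2 (real n)" using i by simp
  ultimately show ?thesis by (intro exI[of _ \<phi>]) auto
next
  case False
  obtain L where L: "n \<le> 2 ^ L" "real L \<le> log 2 (real n) + 1"
    using exists_pow2_ge_log[of n] i by auto
  define k where "k = (if odd L then L + 2 else L + 3)"
  have k: "even (Suc k)" "L + 2 \<le> k" "k \<le> L + 3" by (auto simp: k_def)
  have "(2::nat) ^ L \<le> 2 ^ (k - 2)" using k(2) by (intro power_increasing) auto
  also have "\<dots> \<le> far_all_cap k" using far_all_cap_ge[of "k - 2"] k(2) by (simp only: le_add_diff_inverse2)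
  finally have cap: "i - 1 \<le> far_all_cap k" "n - i - 2 \<le> far_all_cap k" using L(1) i by auto
  define \<phi> where "\<phi> = prefix (Suc k) True (bit_matrix k b (i - 1) (n - i - 2))"
  have "models v \<phi> = (v ! i = b)" if "length v = n" for v
  proof -
    have v: "v \<noteq> []" using that i by auto
    have "models v \<phi> = (\<exists>a\<in>{1..n}. v ! (a - 1) = b \<and> 1 + (i - 1) < a \<and> a + (n - i - 2) < n)"
      unfolding \<phi>_def models_bit_matrix[OF v cap] that ..
    also have "\<dots> = (\<exists>a\<in>{1..n}. v ! (a - 1) = b \<and> a = Suc i)"
      using False i by (intro bex_cong refl) auto
    also have "\<dots> = (v ! i = b)"
      using i by auto
    finally show ?thesis .
  qed
  moreover have "real (qcount \<phi>) \<le> log 2 (real n) + 5"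
    using bit_sentence_syntax(2)[OF k(1)] k(3) L(2) by (simp add: \<phi>_def)
  moreover have "sentence \<phi>" "alt_prenex_ending_all \<phi>"
    using bit_sentence_syntax(1,3)[OF k(1)] by (simp_all only: \<phi>_def)
  ultimately show ?thesis by blast
qed

lemma upper_bound:
  assumes "length w = n" "length w' = n" "w \<noteq> w'"
  shows "\<exists>\<phi>. sentence \<phi> \<and> real (qcount \<phi>) \<le> log 2 (real n) + 5
           \<and> alt_prenex_ending_all \<phi> \<and> models w \<phi> \<and> \<not> models w' \<phi>"
proof -
  have "\<exists>i<n. w ! i \<noteq> w' ! i"
  proof (rule ccontr)
    assume "\<not> (\<exists>i<n. w ! i \<noteq> w' ! i)"
    hence "w = w'" using assms(1,2) by (intro nth_equalityI) auto
    thus False using assms(3) by contradiction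
  qed
  then obtain i where i: "i < n" "w ! i \<noteq> w' ! i" by blast
  from bit_defining_sentence[OF i(1), of "w ! i"] show ?thesis
    using assms(1,2) i(2) by metis
qed

section \<open>Distances around one marked position\<close>

text \<open>Signed distances that the game cannot tell apart with threshold \<open>t\<close>.\<close>

definition similar :: "int \<Rightarrow> int \<Rightarrow> int \<Rightarrow> bool" where
  "similar t d d' \<longleftrightarrow> d = d' \<or> (t \<le> d \<and> t \<le> d') \<or> (d \<le> -t \<and> d' \<le> -t)"

lemma similar_mono: "similar t d d' \<Longrightarrow> s \<le> t \<Longrightarrow> similar s d d'"
  unfolding similar_def by auto

lemma similar_uminus: "similar t (-d) (-d') = similar t d d'"
  unfolding similar_def by auto

lemma similar_commute: "similar t d d' = similar t d' d"
  unfolding similar_def by auto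

lemma similar_split:
  fixes G G' g h t1 t2 :: int
  assumes "G = g + h" "g \<ge> 1" "h \<ge> 1" "t1 \<ge> 1" "t2 \<ge> 1"
    "G = G' \<or> (G \<ge> t1 + t2 \<and> G' \<ge> t1 + t2)"
  shows "\<exists>g' h'. g' \<ge> 1 \<and> h' \<ge> 1 \<and> g' + h' = G' \<and> similar t1 g g' \<and> similar t2 h h'"
proof (cases "G = G'")
  case True thus ?thesis using assms by (auto simp: similar_def)
next
  case False
  hence big: "G \<ge> t1 + t2" "G' \<ge> t1 + t2" using assms by auto
  show ?thesis
  proof (cases "g < t1")
    case True
    thus ?thesis using assms big by (intro exI[of _ g] exI[of _ "G' - g"]) (auto simp: similar_def)
  next
    case g_big: False
    show ?thesis
    proof (cases "h < t2")
      case True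
      thus ?thesis using assms big by (intro exI[of _ "G' - h"] exI[of _ h]) (auto simp: similar_def)
    next
      case False
      thus ?thesis using assms big g_big by (intro exI[of _ t1] exI[of _ "G' - t1"]) (auto simp: similar_def)
    qed
  qed
qed

text \<open>A set \<open>P\<close> of pebbled pairs (a position of the first string, one of the second) on
strings of length \<open>n\<close> whose only \<open>1\<close>s sit at \<open>p\<close> and \<open>q\<close>. With \<open>r\<close> rounds left and
\<open>t = 2 ^ r\<close>, Duplicator keeps all pebble distances \<open>t\<close>-similar; the marked positions are not
pebbled, and get threshold \<open>t - 1\<close> for distances to them but \<open>t + 1\<close> for distances across them.
This sharpening is what makes the marked positions \<open>2 ^ r\<close> and \<open>2 ^ r + 1\<close> indistinguishable.\<close>

definition admissible :: "int \<Rightarrow> int \<Rightarrow> int \<Rightarrow> (int \<times> int) set \<Rightarrow> bool" where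
  "admissible n p q P \<longleftrightarrow> (1,1) \<in> P \<and> (n,n) \<in> P \<and>
     (\<forall>a a'. (a,a') \<in> P \<longrightarrow> 1 \<le> a \<and> a \<le> n \<and> 1 \<le> a' \<and> a' \<le> n \<and> (a = p \<longleftrightarrow> a' = q))"

definition gaps_similar :: "int \<Rightarrow> (int \<times> int) set \<Rightarrow> bool" where
  "gaps_similar t P \<longleftrightarrow> (\<forall>a a' b b'. (a,a') \<in> P \<longrightarrow> (b,b') \<in> P \<longrightarrow> similar t (b - a) (b' - a'))"

definition marked_gaps_similar :: "int \<Rightarrow> int \<Rightarrow> int \<Rightarrow> (int \<times> int) set \<Rightarrow> bool" where
  "marked_gaps_similar t p q P \<longleftrightarrow> (\<forall>a a'. (a,a') \<in> P \<longrightarrow> similar (t-1) (a - p) (a' - q)) \<and>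
     (\<forall>a a' b b'. (a,a') \<in> P \<longrightarrow> (b,b') \<in> P \<longrightarrow> ((a < p \<and> p < b) \<or> (a' < q \<and> q < b')) \<longrightarrow>
        similar (t+1) (b - a) (b' - a'))"

lemma similar_add_Suc:
  fixes x x' y y' t :: int
  assumes "t \<ge> 1" "similar t x x'" "x \<ge> 1" "x' \<ge> 1" "(y = y' \<and> y \<ge> 1) \<or> (y \<ge> 2*t \<and> y' \<ge> 2*t)"
  shows "similar (t+1) (x + y) (x' + y')"
  using assms unfolding similar_def by auto

lemma similar_diff_commute: "similar t (b - a) (b' - a') = similar t (a - b) (a' - b')"
  using similar_uminus[of t "a - b" "a' - b'"] by simp

lemma similar_extend_below:
  fixes a a' l l' b b' s s' :: int
  assumes "similar s (a - l) (a' - l')" "l < a" "l' < a'" "similar s' (l - b) (l' - b')" "b \<le> l"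
    "1 \<le> s" "s \<le> s'"
  shows "similar s (a - b) (a' - b')"
  using assms unfolding similar_def by auto

lemma similar_extend_above:
  fixes a a' h h' b b' s s' :: int
  assumes "similar s (h - a) (h' - a')" "a < h" "a' < h'" "similar s' (b - h) (b' - h')" "h \<le> b"
    "1 \<le> s" "s \<le> s'"
  shows "similar s (b - a) (b' - a')"
  using assms unfolding similar_def by auto

lemma similar_sgn: "similar t d d' \<Longrightarrow> 1 \<le> t \<Longrightarrow> sgn d = sgn d'"
  unfolding similar_def by (auto simp: sgn_if)

lemma admissible_insert:
  "admissible n p q P \<Longrightarrow> 1 \<le> a \<Longrightarrow> a \<le> n \<Longrightarrow> 1 \<le> a' \<Longrightarrow> a' \<le> n \<Longrightarrow> (a = p \<longleftrightarrow> a' = q) \<Longrightarrow>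
   admissible n p q (insert (a,a') P)"
  unfolding admissible_def by auto

lemma gaps_similar_insert:
  assumes P: "gaps_similar t' P" and "t \<le> t'"
    and new: "\<forall>b b'. (b,b') \<in> P \<longrightarrow> similar t (b - a) (b' - a')"
  shows "gaps_similar t (insert (a,a') P)"
  unfolding gaps_similar_def
proof (intro allI impI)
  fix x x' y y' assume x: "(x,x') \<in> insert (a,a') P" and y: "(y,y') \<in> insert (a,a') P"
  consider "(x,x') = (a,a')" "(y,y') = (a,a')" | "(x,x') = (a,a')" "(y,y') \<in> P"
    | "(x,x') \<in> P" "(y,y') = (a,a')" | "(x,x') \<in> P" "(y,y') \<in> P"
    using x y by blast
  thus "similar t (y - x) (y' - x')"
  proof cases
    case 3
    thus ?thesis using new similar_uminus[of t "x - a" "x' - a'"] by auto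
  next
    case 4
    thus ?thesis using P similar_mono \<open>t \<le> t'\<close> unfolding gaps_similar_def by blast
  qed (use new in \<open>auto simp: similar_def\<close>)
qed

lemma marked_gaps_similar_insert:
  assumes P: "marked_gaps_similar t' p q P" and t: "2 \<le> t" "t \<le> t'"
    and mark: "similar (t-1) (a - p) (a' - q)"
    and left: "\<forall>b b'. (b,b') \<in> P \<longrightarrow> b < p \<longrightarrow> p < a \<longrightarrow> similar (t+1) (a - b) (a' - b')"
    and right: "\<forall>b b'. (b,b') \<in> P \<longrightarrow> a < p \<longrightarrow> p < b \<longrightarrow> similar (t+1) (b - a) (b' - a')"
  shows "marked_gaps_similar t p q (insert (a,a') P)"
proof -
  have sgn_P: "sgn (b - p) = sgn (b' - q)" if "(b,b') \<in> P" for b b'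
    using P that t by (intro similar_sgn[of "t' - 1"]) (auto simp: marked_gaps_similar_def)
  have sgn_a: "sgn (a - p) = sgn (a' - q)"
    using mark t by (intro similar_sgn[of "t - 1"]) auto
  have "similar (t-1) (x - p) (x' - q)" if "(x,x') \<in> insert (a,a') P" for x x'
    using that mark P t similar_mono[of "t' - 1" _ _ "t - 1"] unfolding marked_gaps_similar_def by auto
  moreover have "similar (t+1) (y - x) (y' - x')"
    if x: "(x,x') \<in> insert (a,a') P" and y: "(y,y') \<in> insert (a,a') P"
      and straddle: "(x < p \<and> p < y) \<or> (x' < q \<and> q < y')" for x x' y y'
  proof -
    consider "(x,x') = (a,a')" "(y,y') = (a,a')" | "(x,x') = (a,a')" "(y,y') \<in> P"
      | "(x,x') \<in> P" "(y,y') = (a,a')" | "(x,x') \<in> P" "(y,y') \<in> P"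
      using x y by blast
    thus ?thesis
    proof cases
      case 1
      thus ?thesis using straddle by auto
    next
      case 2
      hence "a < p \<and> p < y" using straddle sgn_P[of y y'] sgn_a by (auto simp: sgn_if split: if_splits)
      thus ?thesis using right 2 by auto
    next
      case 3
      hence "x < p \<and> p < a" using straddle sgn_P[of x x'] sgn_a by (auto simp: sgn_if split: if_splits)
      thus ?thesis using left 3 by auto
    next
      case 4
      thus ?thesis using P straddle t similar_mono[of "t' + 1" _ _ "t + 1"]
        unfolding marked_gaps_similar_def by auto
    qed
  qed
  ultimately show ?thesis unfolding marked_gaps_similar_def by blast
qed

lemma invariant_insert:
  fixes t n p q a a' :: int
  assumes t2: "t \<ge> 2" and adm: "admissible n p q P" and gaps: "gaps_similar (2*t) P"
    and marks: "marked_gaps_similar (2*t) p q P"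
    and a'r: "1 \<le> a'" "a' \<le> n" and ar: "1 \<le> a" "a \<le> n"
    and new_gaps: "\<forall>b b'. (b,b') \<in> P \<longrightarrow> similar t (b - a) (b' - a')"
    and new_mark: "similar (t-1) (a - p) (a' - q)"
    and across_left: "\<forall>b b'. (b,b') \<in> P \<longrightarrow> b < p \<longrightarrow> p < a \<longrightarrow> similar (t+1) (a - b) (a' - b')"
    and across_right: "\<forall>b b'. (b,b') \<in> P \<longrightarrow> a < p \<longrightarrow> p < b \<longrightarrow> similar (t+1) (b - a) (b' - a')"
  shows "admissible n p q (insert (a,a') P) \<and> gaps_similar t (insert (a,a') P) \<and>
    marked_gaps_similar t p q (insert (a,a') P)"
proof -
  have "a = p \<longleftrightarrow> a' = q" using similar_sgn[OF new_mark] t2 by (auto simp: sgn_if split: if_splits)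
  thus ?thesis
    using admissible_insert[OF adm ar a'r] gaps_similar_insert[OF gaps _ new_gaps]
      marked_gaps_similar_insert[OF marks t2 _ new_mark across_left across_right] t2 by auto
qed

lemma invariant_facts:
  assumes adm: "admissible n p q P" and gaps: "gaps_similar (2*t) P" and marks: "marked_gaps_similar (2*t) p q P"
  shows "\<And>b b'. (b,b') \<in> P \<Longrightarrow> 1 \<le> b \<and> b \<le> n \<and> 1 \<le> b' \<and> b' \<le> n"
    and "\<And>b b' c c'. (b,b') \<in> P \<Longrightarrow> (c,c') \<in> P \<Longrightarrow> similar (2*t) (c - b) (c' - b')"
    and "\<And>b b'. (b,b') \<in> P \<Longrightarrow> similar (2*t-1) (b - p) (b' - q)"
    and "\<And>b b' c c'. (b,b') \<in> P \<Longrightarrow> (c,c') \<in> P \<Longrightarrow> b < p \<Longrightarrow> p < c \<Longrightarrow> similar (2*t+1) (c - b) (c' - b')"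
  using assms unfolding admissible_def gaps_similar_def marked_gaps_similar_def by blast+

lemma forth_unmarked_gap:
  fixes t n p q a lo lo' hi hi' :: int
  assumes t2: "t \<ge> 2" and adm: "admissible n p q P" and gaps: "gaps_similar (2*t) P" and marks: "marked_gaps_similar (2*t) p q P"
    and lo: "(lo,lo') \<in> P" and hi: "(hi,hi') \<in> P" and la: "lo < a" and ah: "a < hi"
    and btw: "\<forall>b b'. (b,b') \<in> P \<longrightarrow> b \<le> lo \<or> hi \<le> b"
    and c1: "p \<le> lo \<or> hi \<le> p"
  shows "\<exists>a'. 1 \<le> a' \<and> a' \<le> n \<and> admissible n p q (insert (a,a') P) \<and> gaps_similar t (insert (a,a') P) \<and> marked_gaps_similar t p q (insert (a,a') P)"
proof -
  note F = invariant_facts[OF adm gaps marks]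
  have r: "1 \<le> lo" "hi \<le> n" "1 \<le> lo'" "hi' \<le> n" using F(1)[OF lo] F(1)[OF hi] by auto
  have "similar (2*t) (hi - lo) (hi' - lo')" using F(2)[OF lo hi] .
  hence G: "hi - lo = hi' - lo' \<or> (hi - lo \<ge> t + t \<and> hi' - lo' \<ge> t + t)"
    using la ah t2 unfolding similar_def by auto
  obtain g' h' where gh: "g' \<ge> 1" "h' \<ge> 1" "g' + h' = hi' - lo'" "similar t (a - lo) g'" "similar t (hi - a) h'"
    using similar_split[of "hi - lo" "a - lo" "hi - a" t t "hi' - lo'"] G la ah t2 by auto
  define a' where "a' = lo' + g'"
  have a'1: "a' - lo' = g'" "hi' - a' = h'" using gh a'_def by auto
  have lo_a: "similar t (a - lo) (a' - lo')" and a_hi: "similar t (hi - a) (hi' - a')"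
    using gh a'1 by simp_all
  have new_gaps: "\<forall>b b'. (b,b') \<in> P \<longrightarrow> similar t (b - a) (b' - a')"
  proof (intro allI impI)
    fix b b' assume bP: "(b,b') \<in> P"
    show "similar t (b - a) (b' - a')"
    proof (cases "b \<le> lo")
      case True
      have "similar t (a - b) (a' - b')"
        by (rule similar_extend_below[OF lo_a la _ F(2)[OF bP lo] True]) (use gh a'1 t2 in auto)
      thus ?thesis using similar_diff_commute by blast
    next
      case False
      hence "hi \<le> b" using btw bP by auto
      show ?thesis
        by (rule similar_extend_above[OF a_hi ah _ F(2)[OF hi bP] \<open>hi \<le> b\<close>]) (use gh a'1 t2 in auto)
    qed
  qed
  have new_mark: "similar (t-1) (a - p) (a' - q)"
  proof (cases "p \<le> lo")
    case True
    show ?thesis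
      by (rule similar_extend_below[OF similar_mono[OF lo_a] la _ F(3)[OF lo] True])
        (use gh a'1 t2 in auto)
  next
    case False
    hence "hi \<le> p" using c1 by auto
    have "similar (t-1) (p - a) (q - a')"
      by (rule similar_extend_above[OF similar_mono[OF a_hi] ah _ similar_diff_commute[THEN iffD1, OF F(3)[OF hi]] \<open>hi \<le> p\<close>])
        (use gh a'1 t2 in auto)
    thus ?thesis using similar_diff_commute by blast
  qed
  have across_left: "\<forall>b b'. (b,b') \<in> P \<longrightarrow> b < p \<longrightarrow> p < a \<longrightarrow> similar (t+1) (a - b) (a' - b')"
  proof (intro allI impI)
    fix b b' assume bP: "(b,b') \<in> P" and bp: "b < p" and pa: "p < a"
    have pl: "p \<le> lo" using c1 pa ah by auto
    have bl: "b < lo" using bp pl by auto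
    have y: "(lo - b = lo' - b' \<and> lo - b \<ge> 1) \<or> (lo - b \<ge> 2*t \<and> lo' - b' \<ge> 2*t)"
    proof (cases "p = lo")
      case True
      have "similar (2*t) (lo - b) (lo' - b')" using F(2)[OF bP lo] .
      thus ?thesis using bl t2 unfolding similar_def by auto
    next
      case False
      have "similar (2*t+1) (lo - b) (lo' - b')" using F(4)[OF bP lo bp] False pl by auto
      thus ?thesis using bl t2 unfolding similar_def by auto
    qed
    have "similar (t+1) ((a - lo) + (lo - b)) (g' + (lo' - b'))"
      using similar_add_Suc[OF _ gh(4) _ gh(1) y] t2 la by auto
    thus "similar (t+1) (a - b) (a' - b')" using a'1 by (simp add: algebra_simps)
  qed
  have across_right: "\<forall>b b'. (b,b') \<in> P \<longrightarrow> a < p \<longrightarrow> p < b \<longrightarrow> similar (t+1) (b - a) (b' - a')"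
  proof (intro allI impI)
    fix b b' assume bP: "(b,b') \<in> P" and ap: "a < p" and pb: "p < b"
    have ph: "hi \<le> p" using c1 ap la by auto
    have bh: "hi < b" using pb ph by auto
    have y: "(b - hi = b' - hi' \<and> b - hi \<ge> 1) \<or> (b - hi \<ge> 2*t \<and> b' - hi' \<ge> 2*t)"
    proof (cases "p = hi")
      case True
      have "similar (2*t) (b - hi) (b' - hi')" using F(2)[OF hi bP] .
      thus ?thesis using bh t2 unfolding similar_def by auto
    next
      case False
      have "similar (2*t+1) (b - hi) (b' - hi')" using F(4)[OF hi bP _ pb] False ph by auto
      thus ?thesis using bh t2 unfolding similar_def by auto
    qed
    have "similar (t+1) ((hi - a) + (b - hi)) (h' + (b' - hi'))"
      using similar_add_Suc[OF _ gh(5) _ gh(2) y] t2 ah by auto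
    thus "similar (t+1) (b - a) (b' - a')" using a'1 by (simp add: algebra_simps)
  qed
  have "1 \<le> a'" "a' \<le> n" using a'1 gh r by auto
  moreover have "1 \<le> a" "a \<le> n" using la ah r by auto
  ultimately show ?thesis
    using invariant_insert[OF t2 adm gaps marks _ _ _ _ new_gaps new_mark across_left across_right] by blast
qed

lemma forth_right_of_mark:
  fixes t n p q a lo lo' hi hi' :: int
  assumes t2: "t \<ge> 2" and adm: "admissible n p q P" and gaps: "gaps_similar (2*t) P" and marks: "marked_gaps_similar (2*t) p q P"
    and lo: "(lo,lo') \<in> P" and hi: "(hi,hi') \<in> P" and lp: "lo < p" and pa: "p < a" and ah: "a < hi"
    and btw: "\<forall>b b'. (b,b') \<in> P \<longrightarrow> b \<le> lo \<or> hi \<le> b"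
  shows "\<exists>a'. 1 \<le> a' \<and> a' \<le> n \<and> admissible n p q (insert (a,a') P) \<and> gaps_similar t (insert (a,a') P) \<and> marked_gaps_similar t p q (insert (a,a') P)"
proof -
  note F = invariant_facts[OF adm gaps marks]
  have r: "1 \<le> lo" "hi \<le> n" "1 \<le> lo'" "hi' \<le> n" using F(1)[OF lo] F(1)[OF hi] by auto
  have "similar (2*t-1) (lo - p) (lo' - q)" using F(3)[OF lo] .
  hence E: "q - lo' \<ge> 1" "p - lo = q - lo' \<or> (p - lo \<ge> 2*t-1 \<and> q - lo' \<ge> 2*t-1)"
    using lp t2 unfolding similar_def by auto
  have "similar (2*t-1) (hi - p) (hi' - q)" using F(3)[OF hi] .
  hence H: "hi' - q \<ge> 1" "hi - p = hi' - q \<or> (hi - p \<ge> 2*t-1 \<and> hi' - q \<ge> 2*t-1)"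
    using pa ah t2 unfolding similar_def by auto
  have "similar (2*t+1) (hi - lo) (hi' - lo')" using F(4)[OF lo hi lp] pa ah by auto
  hence S: "hi - lo = hi' - lo' \<or> (hi - lo \<ge> 2*t+1 \<and> hi' - lo' \<ge> 2*t+1)"
    using lp pa ah t2 unfolding similar_def by auto
  txt \<open>Duplicator splits the gap between the mark and \<open>hi\<close>. If the mark immediately follows
    \<open>lo\<close> in both strings, the part next to the mark must be \<open>t\<close>-similar (not just
    \<open>(t - 1)\<close>-similar) to keep the distance to \<open>lo\<close> \<open>(t + 1)\<close>-similar.\<close>
  define \<tau> where "\<tau> = (if p - lo = q - lo' \<and> p - lo = 1 then t else t - 1)"
  have \<tau>1: "\<tau> \<ge> 1" "\<tau> \<ge> t - 1" using t2 \<tau>_def by auto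
  have HH: "hi - p = hi' - q \<or> (hi - p \<ge> \<tau> + t \<and> hi' - q \<ge> \<tau> + t)"
    using E H S \<tau>_def by auto
  obtain u' h' where uh: "u' \<ge> 1" "h' \<ge> 1" "u' + h' = hi' - q" "similar \<tau> (a - p) u'" "similar t (hi - a) h'"
    using similar_split[of "hi - p" "a - p" "hi - a" \<tau> t "hi' - q"] HH pa ah t2 \<tau>1 by auto
  define a' where "a' = q + u'"
  have a'1: "a' - q = u'" "hi' - a' = h'" "a' - lo' = (q - lo') + u'" using uh a'_def by auto
  have lo_a: "similar (t+1) (a - lo) (a' - lo')"
  proof -
    have "a - lo = (p - lo) + (a - p)" by simp
    thus ?thesis using a'1 E uh(1,4) \<tau>_def t2 pa unfolding similar_def by (auto split: if_splits)
  qed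
  have a_hi: "similar t (hi - a) (hi' - a')" using uh(5) a'1 by simp
  have new_gaps: "\<forall>b b'. (b,b') \<in> P \<longrightarrow> (b < p \<longrightarrow> similar (t+1) (a - b) (a' - b')) \<and> similar t (b - a) (b' - a')"
  proof (intro allI impI)
    fix b b' assume bP: "(b,b') \<in> P"
    show "(b < p \<longrightarrow> similar (t+1) (a - b) (a' - b')) \<and> similar t (b - a) (b' - a')"
    proof (cases "b \<le> lo")
      case True
      have far: "similar (t+1) (a - b) (a' - b')"
        by (rule similar_extend_below[OF lo_a _ _ F(2)[OF bP lo] True]) (use lp pa a'1 E uh t2 in auto)
      hence "similar t (b - a) (b' - a')" using similar_mono similar_diff_commute by fastforce
      thus ?thesis using far by blast
    next
      case False
      hence bh: "hi \<le> b" using btw bP by auto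
      have "similar t (b - a) (b' - a')"
        by (rule similar_extend_above[OF a_hi ah _ F(2)[OF hi bP] bh]) (use uh a'1 t2 in auto)
      thus ?thesis using pa bh ah by auto
    qed
  qed
  have new_gaps': "\<forall>b b'. (b,b') \<in> P \<longrightarrow> similar t (b - a) (b' - a')" using new_gaps by blast
  have new_mark: "similar (t-1) (a - p) (a' - q)" using uh(4) \<tau>1 a'1 similar_mono by fastforce
  have across_left: "\<forall>b b'. (b,b') \<in> P \<longrightarrow> b < p \<longrightarrow> p < a \<longrightarrow> similar (t+1) (a - b) (a' - b')"
    using new_gaps by blast
  have across_right: "\<forall>b b'. (b,b') \<in> P \<longrightarrow> a < p \<longrightarrow> p < b \<longrightarrow> similar (t+1) (b - a) (b' - a')"
    using pa by auto
  have "1 \<le> a'" "a' \<le> n" using a'1 uh r E by auto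
  moreover have "1 \<le> a" "a \<le> n" using lp pa ah r by auto
  ultimately show ?thesis
    using invariant_insert[OF t2 adm gaps marks _ _ _ _ new_gaps' new_mark across_left across_right] by blast
qed

lemma forth_left_of_mark:
  fixes t n p q a lo lo' hi hi' :: int
  assumes t2: "t \<ge> 2" and adm: "admissible n p q P" and gaps: "gaps_similar (2*t) P" and marks: "marked_gaps_similar (2*t) p q P"
    and lo: "(lo,lo') \<in> P" and hi: "(hi,hi') \<in> P" and la: "lo < a" and ap: "a < p" and ph: "p < hi"
    and btw: "\<forall>b b'. (b,b') \<in> P \<longrightarrow> b \<le> lo \<or> hi \<le> b"
  shows "\<exists>a'. 1 \<le> a' \<and> a' \<le> n \<and> admissible n p q (insert (a,a') P) \<and> gaps_similar t (insert (a,a') P) \<and> marked_gaps_similar t p q (insert (a,a') P)"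
proof -
  note F = invariant_facts[OF adm gaps marks]
  have r: "1 \<le> lo" "hi \<le> n" "1 \<le> lo'" "hi' \<le> n" using F(1)[OF lo] F(1)[OF hi] by auto
  have "similar (2*t-1) (hi - p) (hi' - q)" using F(3)[OF hi] .
  hence E: "hi' - q \<ge> 1" "hi - p = hi' - q \<or> (hi - p \<ge> 2*t-1 \<and> hi' - q \<ge> 2*t-1)"
    using ph t2 unfolding similar_def by auto
  have "similar (2*t-1) (lo - p) (lo' - q)" using F(3)[OF lo] .
  hence H: "q - lo' \<ge> 1" "p - lo = q - lo' \<or> (p - lo \<ge> 2*t-1 \<and> q - lo' \<ge> 2*t-1)"
    using ap la t2 unfolding similar_def by auto
  have "similar (2*t+1) (hi - lo) (hi' - lo')" using F(4)[OF lo hi] la ap ph by auto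
  hence S: "hi - lo = hi' - lo' \<or> (hi - lo \<ge> 2*t+1 \<and> hi' - lo' \<ge> 2*t+1)"
    using la ap ph t2 unfolding similar_def by auto
  txt \<open>Mirror image of \<open>forth_right_of_mark\<close>.\<close>
  define \<tau> where "\<tau> = (if hi - p = hi' - q \<and> hi - p = 1 then t else t - 1)"
  have \<tau>1: "\<tau> \<ge> 1" "\<tau> \<ge> t - 1" using t2 \<tau>_def by auto
  have HH: "p - lo = q - lo' \<or> (p - lo \<ge> \<tau> + t \<and> q - lo' \<ge> \<tau> + t)"
    using E H S \<tau>_def by auto
  obtain u' h' where uh: "u' \<ge> 1" "h' \<ge> 1" "u' + h' = q - lo'" "similar \<tau> (p - a) u'" "similar t (a - lo) h'"
    using similar_split[of "p - lo" "p - a" "a - lo" \<tau> t "q - lo'"] HH ap la t2 \<tau>1 by auto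
  define a' where "a' = q - u'"
  have a'1: "q - a' = u'" "a' - lo' = h'" "hi' - a' = (hi' - q) + u'" using uh a'_def by auto
  have a_hi: "similar (t+1) (hi - a) (hi' - a')"
  proof -
    have "hi - a = (hi - p) + (p - a)" by simp
    thus ?thesis using a'1 E uh(1,4) \<tau>_def t2 ap unfolding similar_def by (auto split: if_splits)
  qed
  have lo_a: "similar t (a - lo) (a' - lo')" using uh(5) a'1 by simp
  have new_gaps: "\<forall>b b'. (b,b') \<in> P \<longrightarrow> (a < p \<longrightarrow> p < b \<longrightarrow> similar (t+1) (b - a) (b' - a')) \<and> similar t (b - a) (b' - a')"
  proof (intro allI impI)
    fix b b' assume bP: "(b,b') \<in> P"
    show "(a < p \<longrightarrow> p < b \<longrightarrow> similar (t+1) (b - a) (b' - a')) \<and> similar t (b - a) (b' - a')"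
    proof (cases "hi \<le> b")
      case True
      have far: "similar (t+1) (b - a) (b' - a')"
        by (rule similar_extend_above[OF a_hi _ _ F(2)[OF hi bP] True]) (use ap ph a'1 E uh t2 in auto)
      hence "similar t (b - a) (b' - a')" using similar_mono by fastforce
      thus ?thesis using far by blast
    next
      case False
      hence bl: "b \<le> lo" using btw bP by auto
      have "similar t (a - b) (a' - b')"
        by (rule similar_extend_below[OF lo_a la _ F(2)[OF bP lo] bl]) (use uh a'1 t2 in auto)
      thus ?thesis using similar_diff_commute bl ph ap la by auto
    qed
  qed
  have new_mark: "similar (t-1) (a - p) (a' - q)"
  proof -
    have "similar (t-1) (p - a) (q - a')" using uh(4) \<tau>1 a'1 similar_mono by fastforce
    thus ?thesis using similar_uminus[of "t-1" "a - p" "a' - q"] by simp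
  qed
  have across_right: "\<forall>b b'. (b,b') \<in> P \<longrightarrow> a < p \<longrightarrow> p < b \<longrightarrow> similar (t+1) (b - a) (b' - a')"
    using new_gaps by blast
  have across_left: "\<forall>b b'. (b,b') \<in> P \<longrightarrow> b < p \<longrightarrow> p < a \<longrightarrow> similar (t+1) (a - b) (a' - b')"
    using ap by auto
  have new_gaps': "\<forall>b b'. (b,b') \<in> P \<longrightarrow> similar t (b - a) (b' - a')" using new_gaps by blast
  have "1 \<le> a'" "a' \<le> n" using a'1 uh r E H by auto
  moreover have "1 \<le> a" "a \<le> n" using la ap ph r by auto
  ultimately show ?thesis
    using invariant_insert[OF t2 adm gaps marks _ _ _ _ new_gaps' new_mark across_left across_right] by blast
qed

lemma finite_enclosing_elements:
  fixes S :: "'a::linorder set"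
  assumes "finite S" "l \<in> S" "h \<in> S" "l \<le> a" "a \<le> h" "a \<notin> S"
  shows "\<exists>lo\<in>S. \<exists>hi\<in>S. lo < a \<and> a < hi \<and> (\<forall>b\<in>S. b \<le> lo \<or> hi \<le> b)"
proof -
  have below: "{b \<in> S. b < a} \<noteq> {}" and above: "{b \<in> S. a < b} \<noteq> {}"
    using assms by (metis (mono_tags) empty_iff mem_Collect_eq order.not_eq_order_implies_strict)+
  define lo where "lo = Lattices_Big.Max {b \<in> S. b < a}"
  define hi where "hi = Lattices_Big.Min {b \<in> S. a < b}"
  have "lo \<in> {b \<in> S. b < a}" unfolding lo_def by (rule Max_in) (use assms(1) below in auto)
  moreover have "hi \<in> {b \<in> S. a < b}" unfolding hi_def by (rule Min_in) (use assms(1) above in auto)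
  moreover have "b \<le> lo \<or> hi \<le> b" if "b \<in> S" for b
  proof (cases "b < a")
    case True
    thus ?thesis using that assms(1) unfolding lo_def by (intro disjI1 Max_ge) auto
  next
    case False
    hence "a < b" using that assms(6) by (metis antisym_conv3)
    thus ?thesis using that assms(1) unfolding hi_def by (intro disjI2 Min_le) auto
  qed
  ultimately show ?thesis by blast
qed

lemma enclosing_pebbles:
  fixes a n :: int
  assumes adm: "admissible n p q P" and fin: "finite P" and ar: "1 \<le> a" "a \<le> n"
    and nP: "\<nexists>a'. (a,a') \<in> P"
  shows "\<exists>lo lo' hi hi'. (lo,lo') \<in> P \<and> (hi,hi') \<in> P \<and> lo < a \<and> a < hi \<and>
           (\<forall>b b'. (b,b') \<in> P \<longrightarrow> b \<le> lo \<or> hi \<le> b)"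
proof -
  have "1 \<in> fst ` P" "n \<in> fst ` P" "a \<notin> fst ` P"
    using adm nP unfolding admissible_def by force+
  from finite_enclosing_elements[OF finite_imageI[OF fin] this(1,2) ar this(3)]
  show ?thesis by fastforce
qed

lemma forth_step:
  fixes t n p q a :: int
  assumes t2: "t \<ge> 2" and adm: "admissible n p q P" and gaps: "gaps_similar (2*t) P"
    and marks: "marked_gaps_similar (2*t) p q P"
    and fin: "finite P" and ar: "1 \<le> a" "a \<le> n" and qr: "1 \<le> q" "q \<le> n"
  shows "\<exists>a'. 1 \<le> a' \<and> a' \<le> n \<and> admissible n p q (insert (a,a') P) \<and>
    gaps_similar t (insert (a,a') P) \<and> marked_gaps_similar t p q (insert (a,a') P)"
proof -
  note F = invariant_facts[OF adm gaps marks]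
  consider (pebbled) a'' where "(a,a'') \<in> P" | (mark) "a = p" | (gap) "a \<noteq> p" "\<nexists>a''. (a,a'') \<in> P"
    by blast
  thus ?thesis
  proof cases
    case pebbled
    have "gaps_similar t P" using gaps similar_mono t2 unfolding gaps_similar_def by fastforce
    moreover have "marked_gaps_similar t p q P"
      using marks similar_mono[of "2*t-1" _ _ "t-1"] similar_mono[of "2*t+1" _ _ "t+1"] t2
      unfolding marked_gaps_similar_def by auto
    ultimately show ?thesis using pebbled adm F(1) insert_absorb by metis
  next
    case mark
    have "\<forall>b b'. (b,b') \<in> P \<longrightarrow> similar t (b - a) (b' - q)"
      using F(3) similar_mono t2 mark by fastforce
    moreover have "similar (t-1) (a - p) (q - q)" using mark by (simp add: similar_def)
    ultimately show ?thesis using invariant_insert[OF t2 adm gaps marks qr ar] mark qr by blast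
  next
    case gap
    obtain lo lo' hi hi' where lo: "(lo,lo') \<in> P" and hi: "(hi,hi') \<in> P" and la: "lo < a" and ah: "a < hi"
      and btw: "\<forall>b b'. (b,b') \<in> P \<longrightarrow> b \<le> lo \<or> hi \<le> b"
      using enclosing_pebbles[OF adm fin ar gap(2)] by blast
    consider "p \<le> lo \<or> hi \<le> p" | "lo < p" "p < a" | "a < p" "p < hi"
      using gap(1) by fastforce
    thus ?thesis
    proof cases
      case 1
      show ?thesis by (rule forth_unmarked_gap[OF t2 adm gaps marks lo hi la ah btw 1])
    next
      case 2
      show ?thesis by (rule forth_right_of_mark[OF t2 adm gaps marks lo hi 2 ah btw])
    next
      case 3
      show ?thesis by (rule forth_left_of_mark[OF t2 adm gaps marks lo hi la 3 btw])
    qed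
  qed
qed

lemma forth_last_round:
  fixes n p q a :: int
  assumes adm: "admissible n p q P" and gaps: "gaps_similar 2 P" and marks: "marked_gaps_similar 2 p q P"
    and fin: "finite P" and ar: "1 \<le> a" "a \<le> n" and qr: "1 \<le> q" "q \<le> n"
  shows "\<exists>a'. 1 \<le> a' \<and> a' \<le> n \<and> admissible n p q (insert (a,a') P) \<and> gaps_similar 1 (insert (a,a') P)"
proof -
  have gaps': "gaps_similar (2*1) P" and marks': "marked_gaps_similar (2*1) p q P" using gaps marks by auto
  note F = invariant_facts[OF adm gaps' marks']
  have insert: "admissible n p q (insert (a,a') P) \<and> gaps_similar 1 (insert (a,a') P)"
    if "1 \<le> a'" "a' \<le> n" "a = p \<longleftrightarrow> a' = q" "\<forall>b b'. (b,b') \<in> P \<longrightarrow> similar 1 (b - a) (b' - a')" for a'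
    using admissible_insert[OF adm ar that(1-3)] gaps_similar_insert[OF gaps _ that(4)] by auto
  consider (pebbled) a'' where "(a,a'') \<in> P" | (mark) "a = p" | (gap) "a \<noteq> p" "\<nexists>a''. (a,a'') \<in> P"
    by blast
  thus ?thesis
  proof cases
    case pebbled
    have "\<forall>b b'. (b,b') \<in> P \<longrightarrow> similar 1 (b - a) (b' - a'')"
      using F(2)[OF pebbled] similar_mono by fastforce
    moreover have "a = p \<longleftrightarrow> a'' = q" using adm pebbled unfolding admissible_def by blast
    ultimately show ?thesis using insert F(1)[OF pebbled] by blast
  next
    case mark
    have "\<forall>b b'. (b,b') \<in> P \<longrightarrow> similar 1 (b - a) (b' - q)"
      using F(3) mark by (fastforce simp: similar_def)
    thus ?thesis using insert[of q] mark qr by blast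
  next
    case gap
    obtain lo lo' hi hi' where lo: "(lo,lo') \<in> P" and hi: "(hi,hi') \<in> P" and la: "lo < a" and ah: "a < hi"
      and btw: "\<forall>b b'. (b,b') \<in> P \<longrightarrow> b \<le> lo \<or> hi \<le> b"
      using enclosing_pebbles[OF adm fin ar gap(2)] by blast
    have r: "1 \<le> lo'" "hi' \<le> n" using F(1)[OF lo] F(1)[OF hi] by auto
    have s1: "lo < p \<longleftrightarrow> lo' < q" "p < hi \<longleftrightarrow> q < hi'"
      using F(3)[OF lo] F(3)[OF hi] unfolding similar_def by auto
    obtain a' where a': "lo' < a'" "a' < hi'" "a' \<noteq> q"
    proof (cases "lo < p \<and> p < hi")
      case True
      have "similar (2*1+1) (hi - lo) (hi' - lo')" using F(4)[OF lo hi] True by auto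
      moreover have "hi - lo \<ge> 3" using True la ah gap(1) by auto
      ultimately have "hi' - lo' \<ge> 3" unfolding similar_def by auto
      thus ?thesis using that[of "if lo' + 1 = q then lo' + 2 else lo' + 1"] by auto
    next
      case False
      have "similar (2*1) (hi - lo) (hi' - lo')" using F(2)[OF lo hi] .
      moreover have "hi - lo \<ge> 2" using la ah by auto
      ultimately have "hi' - lo' \<ge> 2" unfolding similar_def by auto
      moreover have "\<not>(lo' < q \<and> q < hi')" using False s1 by auto
      ultimately show ?thesis using that[of "lo' + 1"] by auto
    qed
    have "similar 1 (b - a) (b' - a')" if bP: "(b,b') \<in> P" for b b'
    proof (cases "b \<le> lo")
      case True
      have "similar (2*1) (lo - b) (lo' - b')" using F(2)[OF bP lo] .
      hence "b' \<le> lo'" using True unfolding similar_def by auto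
      thus ?thesis using True la a' unfolding similar_def by auto
    next
      case False
      hence bh: "hi \<le> b" using btw bP by auto
      have "similar (2*1) (b - hi) (b' - hi')" using F(2)[OF hi bP] .
      hence "hi' \<le> b'" using bh unfolding similar_def by auto
      thus ?thesis using bh ah a' unfolding similar_def by auto
    qed
    moreover have "1 \<le> a'" "a' \<le> n" using a' r by auto
    ultimately show ?thesis using insert a' gap(1) by blast
  qed
qed

section \<open>The Ehrenfeucht--Fraisse argument\<close>

definition ef_invariant :: "int \<Rightarrow> int \<Rightarrow> int \<Rightarrow> nat \<Rightarrow> (int \<times> int) set \<Rightarrow> bool" where
  "ef_invariant n p q r P \<longleftrightarrow> admissible n p q P \<and> gaps_similar (2^r) P \<and> (r > 0 \<longrightarrow> marked_gaps_similar (2^r) p q P)"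

lemma ef_forth:
  assumes g: "ef_invariant n p q (Suc r) P" and fin: "finite P" and ar: "1 \<le> a" "a \<le> n" and qr: "1 \<le> q" "q \<le> n"
  shows "\<exists>a'. 1 \<le> a' \<and> a' \<le> n \<and> ef_invariant n p q r (insert (a,a') P)"
proof (cases r)
  case 0
  have "admissible n p q P" "gaps_similar 2 P" "marked_gaps_similar 2 p q P" using g 0 unfolding ef_invariant_def by auto
  from forth_last_round[OF this fin ar qr] show ?thesis using 0 unfolding ef_invariant_def by auto
next
  case (Suc r')
  define t :: int where "t = 2^r"
  have t2: "t \<ge> 2" using Suc t_def by simp
  have "admissible n p q P" "gaps_similar (2*t) P" "marked_gaps_similar (2*t) p q P" using g unfolding ef_invariant_def t_def by auto
  from forth_step[OF t2 this fin ar qr] show ?thesis using Suc unfolding ef_invariant_def t_def by auto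
qed

definition swap_pairs :: "(int \<times> int) set \<Rightarrow> (int \<times> int) set" where
  "swap_pairs P = (\<lambda>(a,b). (b,a)) ` P"

lemma mem_swap_pairs[simp]: "(a,b) \<in> swap_pairs P \<longleftrightarrow> (b,a) \<in> P"
  unfolding swap_pairs_def by force

lemma swap_pairs_swap_pairs[simp]: "swap_pairs (swap_pairs P) = P"
  unfolding swap_pairs_def by force

lemma swap_pairs_insert[simp]: "swap_pairs (insert (a,b) P) = insert (b,a) (swap_pairs P)"
  unfolding swap_pairs_def by auto

lemma ef_invariant_swap:
  assumes g: "ef_invariant n p q r P" shows "ef_invariant n q p r (swap_pairs P)"
proof -
  have adm: "admissible n p q P" and gaps: "gaps_similar (2^r) P" and marks: "r > 0 \<longrightarrow> marked_gaps_similar (2^r) p q P" using g unfolding ef_invariant_def by auto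
  have "admissible n q p (swap_pairs P)" using adm unfolding admissible_def mem_swap_pairs by blast
  moreover have "gaps_similar (2^r) (swap_pairs P)" unfolding gaps_similar_def mem_swap_pairs
  proof (intro allI impI)
    fix a a' b b' assume "(a',a) \<in> P" "(b',b) \<in> P"
    hence "similar (2^r) (b' - a') (b - a)" using gaps unfolding gaps_similar_def by blast
    thus "similar (2^r) (b - a) (b' - a')" using similar_commute by blast
  qed
  moreover have "r > 0 \<longrightarrow> marked_gaps_similar (2^r) q p (swap_pairs P)"
  proof
    assume "r > 0"
    hence marks': "marked_gaps_similar (2^r) p q P" using marks by auto
    show "marked_gaps_similar (2^r) q p (swap_pairs P)" unfolding marked_gaps_similar_def mem_swap_pairs
    proof (intro conjI allI impI)
      fix a a' assume "(a',a) \<in> P"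
      hence "similar (2^r-1) (a' - p) (a - q)" using marks' unfolding marked_gaps_similar_def by blast
      thus "similar (2^r-1) (a - q) (a' - p)" using similar_commute by blast
    next
      fix a a' b b' assume "(a',a) \<in> P" "(b',b) \<in> P" "a < q \<and> q < b \<or> a' < p \<and> p < b'"
      hence "similar (2^r+1) (b' - a') (b - a)" using marks' unfolding marked_gaps_similar_def by blast
      thus "similar (2^r+1) (b - a) (b' - a')" using similar_commute by blast
    qed
  qed
  ultimately show ?thesis unfolding ef_invariant_def by blast
qed

lemma ef_back:
  assumes g: "ef_invariant n p q (Suc r) P" and fin: "finite P" and ar: "1 \<le> a'" "a' \<le> n" and pr: "1 \<le> p" "p \<le> n"
  shows "\<exists>a. 1 \<le> a \<and> a \<le> n \<and> ef_invariant n p q r (insert (a,a') P)"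
proof -
  have "ef_invariant n q p (Suc r) (swap_pairs P)" using ef_invariant_swap[OF g] .
  moreover have "finite (swap_pairs P)" using fin unfolding swap_pairs_def by auto
  ultimately obtain a where a: "1 \<le> a" "a \<le> n" "ef_invariant n q p r (insert (a',a) (swap_pairs P))"
    using ef_forth[OF _ _ ar pr] by blast
  have "ef_invariant n p q r (swap_pairs (insert (a',a) (swap_pairs P)))" using ef_invariant_swap[OF a(3)] .
  thus ?thesis using a by auto
qed

lemma ef_invariant_mono:
  assumes g: "ef_invariant n p q r P" and QP: "Q \<subseteq> P" and c: "(1,1) \<in> Q" "(n,n) \<in> Q"
  shows "ef_invariant n p q r Q"
proof -
  have adm: "admissible n p q P" and gaps: "gaps_similar (2^r) P" and marks: "r > 0 \<longrightarrow> marked_gaps_similar (2^r) p q P" using g unfolding ef_invariant_def by auto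
  have "admissible n p q Q" using adm c QP unfolding admissible_def by (metis subsetD)
  moreover have "gaps_similar (2^r) Q" using gaps QP unfolding gaps_similar_def by (meson subsetD)
  moreover have "r > 0 \<longrightarrow> marked_gaps_similar (2^r) p q Q" using marks QP unfolding marked_gaps_similar_def by (meson subsetD)
  ultimately show ?thesis unfolding ef_invariant_def by blast
qed
fun qrank :: "form \<Rightarrow> nat" where
  "qrank (Less s t) = 0"
| "qrank (Eq s t) = 0"
| "qrank (S t) = 0"
| "qrank (Neg f) = qrank f"
| "qrank (Conj f g) = max (qrank f) (qrank g)"
| "qrank (Disj f g) = max (qrank f) (qrank g)"
| "qrank (Ex x f) = Suc (qrank f)"
| "qrank (All x f) = Suc (qrank f)"

lemma qrank_le: "qrank f \<le> qcount f"
  by (induction f) auto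

lemma finite_tvars: "finite (tvars t)" by (cases t) auto
lemma finite_fv: "finite (free_vars f)" by (induction f) (auto simp: finite_tvars)

definition unit_string :: "nat \<Rightarrow> nat \<Rightarrow> bool list" where
  "unit_string n p = map (\<lambda>j. Suc j = p) [0..<n]"

lemma length_unit_string[simp]: "length (unit_string n p) = n" unfolding unit_string_def by simp
lemma nth_unit_string: "0 < i \<Longrightarrow> i \<le> n \<Longrightarrow> unit_string n p ! (i - Suc 0) = (i = p)"
  unfolding unit_string_def by auto

definition pebbles :: "nat \<Rightarrow> nat set \<Rightarrow> (nat \<Rightarrow> nat) \<Rightarrow> (nat \<Rightarrow> nat) \<Rightarrow> (int \<times> int) set" where
  "pebbles n X \<sigma> \<sigma>' = {(1,1), (int n, int n)} \<union> (\<lambda>x. (int (\<sigma> x), int (\<sigma>' x))) ` X"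

lemma term_in_pebbles: "tvars s \<subseteq> X \<Longrightarrow> (int (teval (unit_string n p) \<sigma> s), int (teval (unit_string n q) \<sigma>' s)) \<in> pebbles n X \<sigma> \<sigma>'"
  unfolding pebbles_def by (cases s) auto

lemma pebbles_mono: "X \<subseteq> Y \<Longrightarrow> pebbles n X \<sigma> \<sigma>' \<subseteq> pebbles n Y \<sigma> \<sigma>'"
  unfolding pebbles_def by auto

lemma endpoints_in_pebbles: "(1,1) \<in> pebbles n X \<sigma> \<sigma>'" "(int n, int n) \<in> pebbles n X \<sigma> \<sigma>'"
  unfolding pebbles_def by auto

lemma finite_pebbles: "finite X \<Longrightarrow> finite (pebbles n X \<sigma> \<sigma>')"
  unfolding pebbles_def by auto

lemma pebbles_fun_upd: "pebbles n X (\<sigma>(x := a)) (\<sigma>'(x := b)) \<subseteq> insert (int a, int b) (pebbles n (X - {x}) \<sigma> \<sigma>')"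
  unfolding pebbles_def by auto

lemma similar_order:
  fixes a b a' b' :: nat and t :: int
  assumes "similar t (int b - int a) (int b' - int a')" "t \<ge> 1"
  shows "(a < b \<longleftrightarrow> a' < b') \<and> (a = b \<longleftrightarrow> a' = b')"
  using assms unfolding similar_def by auto

lemma ef_invariant_atoms:
  assumes "ef_invariant (int n) (int p) (int q) r (pebbles n X \<sigma> \<sigma>')" and "tvars s \<union> tvars t \<subseteq> X"
  defines "u \<equiv> teval (unit_string n p) \<sigma>" and "u' \<equiv> teval (unit_string n q) \<sigma>'"
  shows "(u s < u t \<longleftrightarrow> u' s < u' t) \<and> (u s = u t \<longleftrightarrow> u' s = u' t)"
proof -
  have "(int (u s), int (u' s)) \<in> pebbles n X \<sigma> \<sigma>'" "(int (u t), int (u' t)) \<in> pebbles n X \<sigma> \<sigma>'"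
    using assms(2) unfolding u_def u'_def by (auto intro: term_in_pebbles)
  hence "similar (2^r) (int (u t) - int (u s)) (int (u' t) - int (u' s))"
    using assms(1) unfolding ef_invariant_def gaps_similar_def by blast
  thus ?thesis using similar_order by simp
qed

lemma ef_invariant_quantifier:
  assumes g: "ef_invariant (int n) (int p) (int q) (Suc r) P" and fin: "finite P"
    and pq: "p \<in> {1..n}" "q \<in> {1..n}"
    and step: "\<And>a b. ef_invariant (int n) (int p) (int q) r (insert (int a, int b) P) \<Longrightarrow> A a = B b"
  shows "(\<exists>a\<in>{1..n}. A a) = (\<exists>b\<in>{1..n}. B b)" and "(\<forall>a\<in>{1..n}. A a) = (\<forall>b\<in>{1..n}. B b)"
proof -
  have forth_answer: "\<exists>b\<in>{1..n}. A a = B b" if a: "a \<in> {1..n}" for a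
  proof -
    have "1 \<le> int a" "int a \<le> int n" "1 \<le> int q" "int q \<le> int n" using a pq by auto
    then obtain b where b: "1 \<le> b" "b \<le> int n" "ef_invariant (int n) (int p) (int q) r (insert (int a, b) P)"
      using ef_forth[OF g fin] by blast
    hence "A a = B (nat b)" using step[of a "nat b"] by simp
    thus ?thesis using b by (intro bexI[of _ "nat b"]) auto
  qed
  have back_answer: "\<exists>a\<in>{1..n}. A a = B b" if b: "b \<in> {1..n}" for b
  proof -
    have "1 \<le> int b" "int b \<le> int n" "1 \<le> int p" "int p \<le> int n" using b pq by auto
    then obtain a where a: "1 \<le> a" "a \<le> int n" "ef_invariant (int n) (int p) (int q) r (insert (a, int b) P)"
      using ef_back[OF g fin] by blast
    hence "A (nat a) = B b" using step[of "nat a" b] by simp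
    thus ?thesis using a by (intro bexI[of _ "nat a"]) auto
  qed
  show "(\<exists>a\<in>{1..n}. A a) = (\<exists>b\<in>{1..n}. B b)" "(\<forall>a\<in>{1..n}. A a) = (\<forall>b\<in>{1..n}. B b)"
    using forth_answer back_answer by blast+
qed

theorem unit_strings_equivalent:
  assumes pq: "p \<in> {1..n}" "q \<in> {1..n}"
  shows "qrank \<phi> \<le> r \<Longrightarrow> ef_invariant (int n) (int p) (int q) r (pebbles n (free_vars \<phi>) \<sigma> \<sigma>') \<Longrightarrow>
     holds (unit_string n p) \<sigma> \<phi> = holds (unit_string n q) \<sigma>' \<phi>"
proof (induction \<phi> arbitrary: r \<sigma> \<sigma>')
  case (S t)
  have "(int (teval (unit_string n p) \<sigma> t), int (teval (unit_string n q) \<sigma>' t)) \<in> pebbles n (free_vars (S t)) \<sigma> \<sigma>'"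
    by (rule term_in_pebbles) simp
  hence "1 \<le> int (teval (unit_string n p) \<sigma> t) \<and> int (teval (unit_string n p) \<sigma> t) \<le> int n \<and>
     1 \<le> int (teval (unit_string n q) \<sigma>' t) \<and> int (teval (unit_string n q) \<sigma>' t) \<le> int n \<and>
     (int (teval (unit_string n p) \<sigma> t) = int p \<longleftrightarrow> int (teval (unit_string n q) \<sigma>' t) = int q)"
    using S.prems(2) unfolding ef_invariant_def admissible_def by blast
  thus ?case by (auto simp: Let_def nth_unit_string)
next
  case (Conj f g)
  have "ef_invariant (int n) (int p) (int q) r (pebbles n (free_vars f) \<sigma> \<sigma>')"
    "ef_invariant (int n) (int p) (int q) r (pebbles n (free_vars g) \<sigma> \<sigma>')"
    by (rule ef_invariant_mono[OF Conj.prems(2) pebbles_mono endpoints_in_pebbles]; simp)+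
  thus ?case using Conj by auto
next
  case (Disj f g)
  have "ef_invariant (int n) (int p) (int q) r (pebbles n (free_vars f) \<sigma> \<sigma>')"
    "ef_invariant (int n) (int p) (int q) r (pebbles n (free_vars g) \<sigma> \<sigma>')"
    by (rule ef_invariant_mono[OF Disj.prems(2) pebbles_mono endpoints_in_pebbles]; simp)+
  thus ?case using Disj by auto
next
  case (Ex x f)
  obtain r' where r: "r = Suc r'" and rank: "qrank f \<le> r'" using Ex.prems(1) by (cases r) auto
  let ?P = "pebbles n (free_vars f - {x}) \<sigma> \<sigma>'"
  have g: "ef_invariant (int n) (int p) (int q) (Suc r') ?P" using Ex.prems(2) r by simp
  have "holds (unit_string n p) (\<sigma>(x := a)) f = holds (unit_string n q) (\<sigma>'(x := b)) f"
    if "ef_invariant (int n) (int p) (int q) r' (insert (int a, int b) ?P)" for a b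
    by (rule Ex.IH[OF rank ef_invariant_mono[OF that pebbles_fun_upd endpoints_in_pebbles]])
  from ef_invariant_quantifier(1)[OF g finite_pebbles[OF finite_Diff[OF finite_fv]] pq this] show ?case by simp
next
  case (All x f)
  obtain r' where r: "r = Suc r'" and rank: "qrank f \<le> r'" using All.prems(1) by (cases r) auto
  let ?P = "pebbles n (free_vars f - {x}) \<sigma> \<sigma>'"
  have g: "ef_invariant (int n) (int p) (int q) (Suc r') ?P" using All.prems(2) r by simp
  have "holds (unit_string n p) (\<sigma>(x := a)) f = holds (unit_string n q) (\<sigma>'(x := b)) f"
    if "ef_invariant (int n) (int p) (int q) r' (insert (int a, int b) ?P)" for a b
    by (rule All.IH[OF rank ef_invariant_mono[OF that pebbles_fun_upd endpoints_in_pebbles]])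
  from ef_invariant_quantifier(2)[OF g finite_pebbles[OF finite_Diff[OF finite_fv]] pq this] show ?case by simp
next
  case (Less s t)
  thus ?case using ef_invariant_atoms[of n p q r _ \<sigma> \<sigma>' s t] by simp
next
  case (Eq s t)
  thus ?case using ef_invariant_atoms[of n p q r _ \<sigma> \<sigma>' s t] by simp
next
  case (Neg f)
  thus ?case by simp
qed

lemma ef_invariant_initial:
  fixes n t :: nat and r :: nat
  assumes t: "t = 2^r" "r \<ge> 1" and nt: "2 * t \<le> n"
  shows "ef_invariant (int n) (int t) (int (t+1)) r (pebbles n {} \<sigma> \<sigma>')"
proof -
  have pebbles_empty: "pebbles n {} \<sigma> \<sigma>' = {(1,1), (int n, int n)}" unfolding pebbles_def by simp
  have t2: "t \<ge> 2" using t by (cases r) auto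
  have T: "(2::int)^r = int t" using t by simp
  have diag: "\<And>a a'. (a,a') \<in> pebbles n {} \<sigma> \<sigma>' \<Longrightarrow> a' = a" unfolding pebbles_empty by auto
  have "admissible (int n) (int t) (int (t+1)) (pebbles n {} \<sigma> \<sigma>')"
    unfolding admissible_def pebbles_empty using t2 nt by auto
  moreover have "gaps_similar (2^r) (pebbles n {} \<sigma> \<sigma>')"
    unfolding gaps_similar_def using diag by (auto simp: similar_def)
  moreover have "marked_gaps_similar (2^r) (int t) (int (t+1)) (pebbles n {} \<sigma> \<sigma>')"
  proof -
    have "similar (2^r - 1) (a - int t) (a' - int (t+1))" if "(a,a') \<in> pebbles n {} \<sigma> \<sigma>'" for a a'
    proof -
      have "(a = 1 \<and> a' = 1) \<or> (a = int n \<and> a' = int n)" using that unfolding pebbles_empty by auto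
      thus ?thesis unfolding T similar_def using t2 nt by auto
    qed
    moreover have "similar (2^r + 1) (b - a) (b' - a')" if "(a,a') \<in> pebbles n {} \<sigma> \<sigma>'" "(b,b') \<in> pebbles n {} \<sigma> \<sigma>'" for a a' b b'
      using diag[OF that(1)] diag[OF that(2)] by (simp add: similar_def)
    ultimately show ?thesis unfolding marked_gaps_similar_def by blast
  qed
  ultimately show ?thesis unfolding ef_invariant_def by blast
qed

lemma unit_strings_agree:
  assumes r: "1 \<le> r" and n: "2 ^ (r + 1) \<le> n" and \<phi>: "sentence \<phi>" "qrank \<phi> \<le> r"
  shows "models (unit_string n (2 ^ r)) \<phi> = models (unit_string n (2 ^ r + 1)) \<phi>"
proof -
  have "(2::nat) ^ 1 \<le> 2 ^ r" using r by (intro power_increasing) auto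
  hence pq: "2 ^ r \<in> {1..n}" "2 ^ r + 1 \<in> {1..n}" using n by auto
  have "2 * 2 ^ r \<le> n" using n by simp
  from ef_invariant_initial[OF refl r this]
  have "ef_invariant (int n) (int (2 ^ r)) (int (2 ^ r + 1)) r (pebbles n (free_vars \<phi>) (\<lambda>_. 1) (\<lambda>_. 1))"
    using \<phi>(1) by (simp add: sentence_def)
  from unit_strings_equivalent[OF pq \<phi>(2) this] show ?thesis
    by (simp add: models_def)
qed

lemma lower_bound:
  "\<exists>N::nat. \<forall>n\<ge>N. \<exists>w w'. length w = n \<and> length w' = n \<and> w \<noteq> w' \<and>
            (\<forall>\<phi>. sentence \<phi> \<and> models w \<phi> \<and> \<not> models w' \<phi> \<longrightarrow>
                  real (qcount \<phi>) \<ge> of_int \<lfloor>log 2 (real n)\<rfloor>)"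
proof (intro exI[of _ 4] allI impI)
  fix n :: nat assume n4: "4 \<le> n"
  have "0 \<le> \<lfloor>log 2 (real n)\<rfloor>" using n4 by simp
  then obtain m :: nat where m: "\<lfloor>log 2 (real n)\<rfloor> = int m" by (metis nonneg_int_cases)
  have mp: "2 ^ m \<le> n" "n < 2 ^ (m + 1)" using floor_log_nat_eq_powr_iff[of 2 n m] m n4 by auto
  have "m \<ge> 2"
  proof (rule ccontr)
    assume "\<not> m \<ge> 2"
    hence "m = 0 \<or> m = 1" by auto
    hence "(2::nat) ^ (m + 1) \<le> 4" by auto
    thus False using mp n4 by auto
  qed
  define r where "r = m - 1"
  have r: "1 \<le> r" "2 ^ (r + 1) \<le> n" "r + 1 = m" using \<open>m \<ge> 2\<close> mp by (auto simp: r_def)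
  define w where "w = unit_string n (2 ^ r)"
  define w' where "w' = unit_string n (2 ^ r + 1)"
  have "1 \<le> (2::nat) ^ r" "(2::nat) ^ r \<le> n" using r(2) by (auto intro: order.trans[of _ "2 ^ (r + 1)"])
  hence "w ! (2 ^ r - 1) \<noteq> w' ! (2 ^ r - 1)" unfolding w_def w'_def by (simp add: nth_unit_string)
  hence "w \<noteq> w'" by auto
  moreover have "real (qcount \<phi>) \<ge> of_int \<lfloor>log 2 (real n)\<rfloor>"
    if "sentence \<phi> \<and> models w \<phi> \<and> \<not> models w' \<phi>" for \<phi>
  proof -
    have "\<not> qrank \<phi> \<le> r" using unit_strings_agree[OF r(1,2)] that unfolding w_def w'_def by blast
    hence "m \<le> qcount \<phi>" using qrank_le[of \<phi>] r(3) by simp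
    thus ?thesis using m by simp
  qed
  ultimately show "\<exists>w w'. length w = n \<and> length w' = n \<and> w \<noteq> w' \<and>
            (\<forall>\<phi>. sentence \<phi> \<and> models w \<phi> \<and> \<not> models w' \<phi> \<longrightarrow>
                  real (qcount \<phi>) \<ge> of_int \<lfloor>log 2 (real n)\<rfloor>)"
    by (intro exI[of _ w] exI[of _ w']) (auto simp: w_def w'_def)
qed

theorem mainTheorem7:
  shows "(\<exists>C::real. \<forall>n::nat. n \<ge> 1 \<longrightarrow>
            (\<forall>w w'. length w = n \<and> length w' = n \<and> w \<noteq> w' \<longrightarrow>
               (\<exists>\<phi>. sentence \<phi> \<and> real (qcount \<phi>) \<le> log 2 (real n) + C
                     \<and> alt_prenex_ending_all \<phi> \<and> models w \<phi> \<and> \<not> models w' \<phi>)))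
       \<and> (\<exists>N::nat. \<forall>n\<ge>N. \<exists>w w'. length w = n \<and> length w' = n \<and> w \<noteq> w' \<and>
            (\<forall>\<phi>. sentence \<phi> \<and> models w \<phi> \<and> \<not> models w' \<phi> \<longrightarrow>
                  real (qcount \<phi>) \<ge> of_int \<lfloor>log 2 (real n)\<rfloor>))"
  using upper_bound lower_bound by blast

end
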